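(* Let $(X,\mathbf h,\Lambda_0,\widetilde B_0)$ be a quantum seed, let $(X',\mathbf h,\Lambda_1,\widetilde B_1)=\mu_1(X,\mathbf h,\Lambda_0,\widetilde B_0)$, let $j\in[2,n]$, and let $X''_j$ be the $j$-th cluster variable of $\mu_j(X',\mathbf h,\Lambda_1,\widetilde B_1)$ (i.e. $X''_j=\mu_j\mu_1(X_j)$). Let $X'_1$ be the first cluster variable of $\mu_1(X,\mathbf h,\Lambda_0,\widetilde B_0)$ and $X'_j$ the $j$-th cluster variable of $\mu_j(X,\mathbf h,\Lambda_0,\widetilde B_0)$. Then $$\mathbb{ZP}[X_1,X'_1,X_2^{\pm1},\dots,X_{j-1}^{\pm1},X_j,X''_j,X_{j+1}^{\pm1},\dots,X_n^{\pm1}]=\mathbb{ZP}[X_1,X'_1,X_2^{\pm1},\dots,X_{j-1}^{\pm1},X_j,X'_j,X_{j+1}^{\pm1},\dots,X_n^{\pm1}].$$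
   Context: Notation: $[a,b]=\{a,a+1,\dots,b\}$; $[x]_+=\max(x,0)$, applied entrywise to vectors; $e_1,\dots,e_m$ is the standard basis of $\mathbb Z^m$. Fix integers $m\ge n\ge 2$. A compatible pair $(\Lambda,\widetilde B)$ consists of an $m\times n$ integer matrix $\widetilde B=(b_{kl})$ and a skew-symmetric $m\times m$ integer matrix $\Lambda$ such that $\Lambda\widetilde B=-\begin{bmatrix}D\\0\end{bmatrix}$ for some $D=\mathrm{diag}(\tilde d_1,\dots,\tilde d_n)$ with all $\tilde d_k\in\mathbb Z_{>0}$. Write $\Lambda(a,b)=a^T\Lambda b$. Fix positive integers $d_1,\dots,d_n$ such that $d_k$ divides every entry of the $k$-th column $b^k$ of $\widetilde B$ (preserved under mutation); $\beta^k=\frac1{d_k}b^k$. The quantum torus $\mathcal T(\Lambda)$ is the $\mathbb Z[q^{\pm1/2}]$-algebra with basis $\{X(c)\mid c\in\mathbb Z^m\}$ and multiplication $X(c)X(d)=q^{\frac12\Lambda(c,d)}X(c+d)$; $\mathcal F$ is its skew field of fractions, $X_k=X(e_k)$. For $k\in[1,n]$, $\mathbf h_k=(h_{k,0},\dots,h_{k,d_k})$ with $h_{k,r}\in\mathbb Z[q^{\pm1/2}]$, $h_{k,r}=h_{k,d_k-r}$, $h_{k,0}=h_{k,d_k}=1$. A quantum seed $(X,\mathbf h,\Lambda,\widetilde B)$ consists of a compatible pair, $\mathbf h$, and a map $X:\mathbb Z^m\to\mathcal F$ with $X(c)X(d)=q^{\frac12\Lambda(c,d)}X(c+d)$. Mutation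 in direction $i$: $\mu_i(X,\mathbf h,\Lambda,\widetilde B)=(X',\mathbf h,E^T\Lambda E,E\widetilde BF)$ where $E_{kl}=\delta_{kl}$ ($l\neq i$), $E_{ii}=-1$, $E_{ki}=[-\varepsilon b_{ki}]_+$ ($k\ne i$), $F_{kl}=\delta_{kl}$ ($k\ne i$), $F_{ii}=-1$, $F_{il}=[\varepsilon b_{il}]_+$ ($l\ne i$), $\varepsilon\in\{\pm1\}$ arbitrary, and $X'$ is the map satisfying $X'(c)X'(d)=q^{\frac12\Lambda'(c,d)}X'(c+d)$ for $\Lambda'=E^T\Lambda E$, determined by $X'(e_k)=X(e_k)$ ($k\ne i$) and $X'(e_i)=\sum_{r=0}^{d_i}h_{i,r}X(r[\beta^i]_++(d_i-r)[-\beta^i]_+-e_i)$. $\mathbb{ZP}$ is the ring of Laurent polynomials in $X_{n+1},\dots,X_m$ with coefficients in $\mathbb Z[q^{\pm1/2}]$; for $Y_1,\dots,Y_s\in\mathcal F$, $\mathbb{ZP}[Y_1,\dots,Y_s]$ is the subring of $\mathcal F$ generated by $\mathbb{ZP}$ and the $Y_k$ (exponent $\pm1$ means both $Y$ and $Y^{-1}$ are adjoined). *)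

theory Defs
  imports Main
begin

text \<open>Vectors in Z^m are functions nat => int supported on [1,m];
  matrices are functions nat => nat => int (only entries with indices in range matter).\<close>

definition vec_in :: "nat \<Rightarrow> (nat \<Rightarrow> int) \<Rightarrow> bool" where
  "vec_in m c \<longleftrightarrow> (\<forall>k. (k = 0 \<or> m < k) \<longrightarrow> c k = 0)"

definition unitv :: "nat \<Rightarrow> nat \<Rightarrow> int" where
  "unitv i = (\<lambda>k. if k = i then 1 else 0)"

definition pos :: "int \<Rightarrow> int" where
  "pos x = max x 0"

definition bil :: "nat \<Rightarrow> (nat \<Rightarrow> nat \<Rightarrow> int) \<Rightarrow> (nat \<Rightarrow> int) \<Rightarrow> (nat \<Rightarrow> int) \<Rightarrow> int" where
  "bil m L a b = (\<Sum>k=1..m. \<Sum>l=1..m. a k * L k l * b l)"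

definition compatible_pair ::
  "nat \<Rightarrow> nat \<Rightarrow> (nat \<Rightarrow> nat \<Rightarrow> int) \<Rightarrow> (nat \<Rightarrow> nat \<Rightarrow> int) \<Rightarrow> bool" where
  "compatible_pair m n L B \<longleftrightarrow>
     (\<forall>k\<in>{1..m}. \<forall>l\<in>{1..m}. L k l = - L l k) \<and>
     (\<exists>dt :: nat \<Rightarrow> int. (\<forall>l\<in>{1..n}. dt l > 0) \<and>
        (\<forall>k\<in>{1..m}. \<forall>l\<in>{1..n}.
           (\<Sum>p=1..m. L k p * B p l) = (if k = l then - dt l else 0)))"

definition mutE :: "(nat \<Rightarrow> nat \<Rightarrow> int) \<Rightarrow> nat \<Rightarrow> int \<Rightarrow> nat \<Rightarrow> nat \<Rightarrow> int" where
  "mutE B i eps = (\<lambda>k l. if l \<noteq> i then (if k = l then 1 else 0)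
                         else if k = i then -1 else pos (- eps * B k i))"

definition mutF :: "(nat \<Rightarrow> nat \<Rightarrow> int) \<Rightarrow> nat \<Rightarrow> int \<Rightarrow> nat \<Rightarrow> nat \<Rightarrow> int" where
  "mutF B i eps = (\<lambda>k l. if k \<noteq> i then (if k = l then 1 else 0)
                         else if l = i then -1 else pos (eps * B i l))"

definition mut_Lambda :: "nat \<Rightarrow> (nat \<Rightarrow> nat \<Rightarrow> int) \<Rightarrow> (nat \<Rightarrow> nat \<Rightarrow> int) \<Rightarrow> nat \<Rightarrow> int
    \<Rightarrow> nat \<Rightarrow> nat \<Rightarrow> int" where
  "mut_Lambda m L B i eps = (\<lambda>k l. \<Sum>p=1..m. \<Sum>q=1..m.
       mutE B i eps p k * L p q * mutE B i eps q l)"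

definition mut_B :: "nat \<Rightarrow> nat \<Rightarrow> (nat \<Rightarrow> nat \<Rightarrow> int) \<Rightarrow> nat \<Rightarrow> int
    \<Rightarrow> nat \<Rightarrow> nat \<Rightarrow> int" where
  "mut_B m n B i eps = (\<lambda>k l. \<Sum>p=1..m. \<Sum>q=1..n.
       mutE B i eps k p * B p q * mutF B i eps q l)"

text \<open>Z[q^{+-1/2}] inside the ambient division ring, with v playing the role of q^{1/2}.\<close>
definition laurent :: "'f::division_ring \<Rightarrow> 'f set" where
  "laurent v = {(\<Sum>k\<in>K. of_int (a k) * v powi k) | K a. finite K}"

definition qtorus_rel :: "nat \<Rightarrow> (nat \<Rightarrow> nat \<Rightarrow> int) \<Rightarrow> 'f::division_ring \<Rightarrow>
    ((nat \<Rightarrow> int) \<Rightarrow> 'f) \<Rightarrow> bool" where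
  "qtorus_rel m L v X \<longleftrightarrow>
     (\<forall>c d. vec_in m c \<longrightarrow> vec_in m d \<longrightarrow>
        X c * X d = v powi (bil m L c d) * X (\<lambda>k. c k + d k))"

text \<open>x is an embedding of the quantum torus T(Lambda) (basis X(c), coefficients Z[q^{+-1/2}],
  q^{1/2} mapped to the central element v) into the division ring 'f: unital, multiplicative,
  v central, and the family v^k X(c) is Z-linearly independent (injectivity).
  By Ore's theorem the division subring generated by the image is the skew field of fractions.\<close>
definition qtorus_embedding :: "nat \<Rightarrow> (nat \<Rightarrow> nat \<Rightarrow> int) \<Rightarrow> 'f::division_ring \<Rightarrow>
    ((nat \<Rightarrow> int) \<Rightarrow> 'f) \<Rightarrow> bool" where
  "qtorus_embedding m L v X \<longleftrightarrow>
     qtorus_rel m L v X \<and> X (\<lambda>_. 0) = 1 \<and>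
     (\<forall>c. vec_in m c \<longrightarrow> v * X c = X c * v) \<and>
     (\<forall>C K (a :: (nat \<Rightarrow> int) \<Rightarrow> int \<Rightarrow> int). finite C \<longrightarrow> finite K \<longrightarrow> Ball C (vec_in m) \<longrightarrow>
        (\<Sum>c\<in>C. \<Sum>k\<in>K. of_int (a c k) * v powi k * X c) = 0 \<longrightarrow>
        (\<forall>c\<in>C. \<forall>k\<in>K. a c k = 0))"

definition beta :: "nat \<Rightarrow> (nat \<Rightarrow> nat \<Rightarrow> int) \<Rightarrow> (nat \<Rightarrow> int) \<Rightarrow> nat \<Rightarrow> nat \<Rightarrow> int" where
  "beta m B d i = (\<lambda>k. if 1 \<le> k \<and> k \<le> m then B k i div d i else 0)"

definition mut_var :: "nat \<Rightarrow> (nat \<Rightarrow> nat \<Rightarrow> int) \<Rightarrow> (nat \<Rightarrow> int) \<Rightarrow> (nat \<Rightarrow> nat \<Rightarrow> 'f::division_ring)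
    \<Rightarrow> ((nat \<Rightarrow> int) \<Rightarrow> 'f) \<Rightarrow> nat \<Rightarrow> 'f" where
  "mut_var m B d h X i = (\<Sum>r\<in>{0..nat (d i)}.
      h i r * X (\<lambda>k. int r * pos (beta m B d i k) + (d i - int r) * pos (- beta m B d i k)
                    - unitv i k))"

inductive_set gen_ring :: "'f::ring_1 set \<Rightarrow> 'f set" for S where
  base: "x \<in> S \<Longrightarrow> x \<in> gen_ring S"
| one: "1 \<in> gen_ring S"
| add: "x \<in> gen_ring S \<Longrightarrow> y \<in> gen_ring S \<Longrightarrow> x + y \<in> gen_ring S"
| neg: "x \<in> gen_ring S \<Longrightarrow> - x \<in> gen_ring S"
| mult: "x \<in> gen_ring S \<Longrightarrow> y \<in> gen_ring S \<Longrightarrow> x * y \<in> gen_ring S"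

text \<open>ZP: Laurent polynomials in the frozen variables X_{n+1},...,X_m with coefficients in
  Z[q^{+-1/2}], i.e. Z[q^{+-1/2}]-combinations of X(c) with c supported on [n+1,m].\<close>
definition ZP :: "nat \<Rightarrow> nat \<Rightarrow> 'f::division_ring \<Rightarrow> ((nat \<Rightarrow> int) \<Rightarrow> 'f) \<Rightarrow> 'f set" where
  "ZP m n v X = {(\<Sum>c\<in>C. p c * X c) | C p. finite C \<and>
       (\<forall>c\<in>C. vec_in m c \<and> (\<forall>k. 1 \<le> k \<and> k \<le> n \<longrightarrow> c k = 0) \<and> p c \<in> laurent v)}"

definition ZP_adj :: "nat \<Rightarrow> nat \<Rightarrow> 'f::division_ring \<Rightarrow> ((nat \<Rightarrow> int) \<Rightarrow> 'f) \<Rightarrow> 'f set \<Rightarrow> 'f set" where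
  "ZP_adj m n v X Ys = gen_ring (ZP m n v X \<union> Ys)"

end

theory Submission
  imports Defs "HOL-Library.Function_Algebras"
begin

text \<open>
  Write \<open>A = \<int>\<P>[X\<^sub>1, X\<^sub>1', X\<^sub>2\<^sup>\<plusminus>\<^sup>1, \<dots>, X\<^sub>j, \<dots>, X\<^sub>n\<^sup>\<plusminus>\<^sup>1]\<close>, in which \<open>X\<^sub>j\<close> is not inverted.
  If \<open>b\<^sub>1\<^sub>j = 0\<close> then \<open>X\<^sub>j'' = X\<^sub>j'\<close> directly. Otherwise let \<open>b = |b\<^sub>1\<^sub>j|\<close> and work modulo
  the right ideal \<open>X\<^sub>j A\<close>, from whose elements \<open>X\<^sub>j\<close> can be cancelled inside \<open>A\<close>.
  After multiplication by \<open>X\<^sub>1\<close>, every term of \<open>X\<^sub>1'\<close> except the one with exponent \<open>E e\<^sub>1\<close>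
  becomes divisible by \<open>X\<^sub>j\<close>; hence \<open>X\<^sub>1\<^sup>b X'(c) \<equiv> X\<^sub>1\<^sup>b X(E c)\<close> whenever \<open>0 \<le> c\<^sub>1 \<le> b\<close> and
  \<open>c\<^sub>j \<ge> 0\<close>, where \<open>E\<close> is the mutation matrix whose sign makes it fix the \<open>j\<close>-th coordinate.
  As \<open>E\<close> carries the \<open>j\<close>-th exchange vector of the mutated seed to the old one, this gives
  \<open>X\<^sub>1\<^sup>b X\<^sub>j X\<^sub>j'' \<equiv> u X\<^sub>j X\<^sub>j'\<close> for a monomial \<open>u\<close> that is a unit of \<open>A\<close>, and cancelling \<open>X\<^sub>j\<close>
  shows \<open>X\<^sub>j' \<in> A[X\<^sub>j'']\<close>. Likewise \<open>X\<^sub>1'\<^sup>b X\<^sub>1\<^sup>b\<close> is congruent to a unit monomial, which yields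
  \<open>X\<^sub>j'' \<in> A[X\<^sub>j']\<close>. Below, \<open>X\<^sub>1'\<close>, \<open>X\<^sub>j'\<close> and \<open>X\<^sub>j''\<close> are called \<open>Y1\<close>, \<open>Yj\<close> and \<open>Zj\<close>.
\<close>

(* The first mutation direction is the literal index 1; keep it from being rewritten to Suc 0. *)
declare One_nat_def [simp del]

definition vscale :: "int \<Rightarrow> (nat \<Rightarrow> int) \<Rightarrow> nat \<Rightarrow> int" where
  "vscale a c = (\<lambda>k. a * c k)"

lemma vscale_apply [simp]: "vscale a c k = a * c k"
  by (simp add: vscale_def)

lemma unitv_apply: "unitv i k = (if k = i then 1 else 0)"
  by (simp add: unitv_def)

lemma vec_in_add [intro]: "vec_in m c \<Longrightarrow> vec_in m d \<Longrightarrow> vec_in m (c + d)"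
  and vec_in_diff [intro]: "vec_in m c \<Longrightarrow> vec_in m d \<Longrightarrow> vec_in m (c - d)"
  and vec_in_uminus [intro]: "vec_in m c \<Longrightarrow> vec_in m (- c)"
  and vec_in_vscale [intro]: "vec_in m c \<Longrightarrow> vec_in m (vscale a c)"
  and vec_in_zero [intro]: "vec_in m 0"
  by (simp_all add: vec_in_def)

lemma vec_in_unitv [intro]: "k \<in> {1..m} \<Longrightarrow> vec_in m (unitv k)"
  by (auto simp add: vec_in_def unitv_def)

lemma vec_in_eq_zero: "vec_in m c \<Longrightarrow> \<forall>k\<in>{1..m}. c k = 0 \<Longrightarrow> c = 0"
proof (rule ext)
  fix k assume "vec_in m c" "\<forall>k\<in>{1..m}. c k = 0"
  then show "c k = 0 k"
    unfolding vec_in_def by (cases "k = 0 \<or> m < k") auto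
qed

lemma bil_add_left: "bil m L (a + b) c = bil m L a c + bil m L b c"
  and bil_add_right: "bil m L c (a + b) = bil m L c a + bil m L c b"
  and bil_diff_left: "bil m L (a - b) c = bil m L a c - bil m L b c"
  and bil_diff_right: "bil m L c (a - b) = bil m L c a - bil m L c b"
  and bil_uminus_left: "bil m L (- a) c = - bil m L a c"
  and bil_uminus_right: "bil m L c (- a) = - bil m L c a"
  and bil_vscale_left: "bil m L (vscale x a) c = x * bil m L a c"
  and bil_vscale_right: "bil m L c (vscale x a) = x * bil m L c a"
  unfolding bil_def
  by (simp_all add: algebra_simps sum.distrib sum_subtractf sum_negf sum_distrib_left)

lemmas bil_linear = bil_add_left bil_add_right bil_diff_left bil_diff_right
  bil_uminus_left bil_uminus_right bil_vscale_left bil_vscale_right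

lemma bil_zero_left [simp]: "bil m L 0 c = 0"
  and bil_zero_right [simp]: "bil m L c 0 = 0"
  unfolding bil_def by simp_all

lemma bil_skew:
  assumes "\<forall>k\<in>{1..m}. \<forall>l\<in>{1..m}. L k l = - L l k"
  shows "bil m L a b = - bil m L b a"
proof -
  have "bil m L b a = (\<Sum>l=1..m. \<Sum>k=1..m. b k * L k l * a l)"
    unfolding bil_def by (rule sum.swap)
  also have "\<dots> = (\<Sum>l=1..m. \<Sum>k=1..m. - (a l * L l k * b k))"
  proof (intro sum.cong refl)
    fix l k assume "l \<in> {1..m}" "k \<in> {1..m}"
    then have "L k l = - L l k" using assms by blast
    then show "b k * L k l * a l = - (a l * L l k * b k)" by simp
  qed
  finally show ?thesis unfolding bil_def by (simp add: sum_negf)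
qed

lemma pos_mult_pos: "(a::int) > 0 \<Longrightarrow> pos (a * x) = a * pos x"
  by (simp add: pos_def max_def mult_le_0_iff)

lemma pos_uminus: "pos (- x) = pos x - (x::int)"
  by (simp add: pos_def max_def)

lemma power_int_commuting_commutes:
  fixes x y :: "'f::division_ring"
  assumes "x * y = y * x"
  shows "x powi k * y = y * x powi k"
proof -
  have inv: "inverse x * y = y * inverse x"
    using mult_commute_imp_mult_inverse_commute[of x y] assms by simp
  show ?thesis
    by (simp add: power_int_def power_commuting_commutes[OF assms] power_commuting_commutes[OF inv])
qed

lemma laurent_powi: "v powi k \<in> laurent v"
  unfolding laurent_def by (rule CollectI, rule exI[of _ "{k}"], rule exI[of _ "\<lambda>_. 1"]) simp

lemma laurent_commute:
  fixes v y :: "'f::division_ring"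
  assumes "p \<in> laurent v" "v * y = y * v"
  shows "p * y = y * p"
proof -
  obtain K a where p: "p = (\<Sum>k\<in>K. of_int (a k) * v powi k)"
    using assms(1) unfolding laurent_def by blast
  have "of_int (a k) * v powi k * y = y * (of_int (a k) * v powi k)" for k
    using power_int_commuting_commutes[OF assms(2)] by (metis mult.assoc mult_of_int_commute)
  then show ?thesis unfolding p by (simp add: sum_distrib_left sum_distrib_right)
qed

lemma laurent_one: "1 \<in> laurent v"
  using laurent_powi[of v 0] by simp

lemma X_in_ZP:
  assumes "vec_in m c" "\<forall>k\<in>{1..n}. c k = 0"
  shows "X c \<in> ZP m n v X"
proof -
  have "X c = (\<Sum>c'\<in>{c}. 1 * X c')" by simp
  then show ?thesis
    unfolding ZP_def using assms laurent_one by fastforce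
qed

lemma gen_ring_subset: "S \<subseteq> gen_ring T \<Longrightarrow> gen_ring S \<subseteq> gen_ring T"
proof
  fix x assume "S \<subseteq> gen_ring T" "x \<in> gen_ring S"
  then show "x \<in> gen_ring T"
    by (induct rule: gen_ring.induct[OF \<open>x \<in> gen_ring S\<close>]) (auto intro: gen_ring.intros)
qed

lemma gen_ring_diff: "x \<in> gen_ring S \<Longrightarrow> y \<in> gen_ring S \<Longrightarrow> x - y \<in> gen_ring S"
  by (metis diff_conv_add_uminus gen_ring.add gen_ring.neg)

lemma gen_ring_zero: "0 \<in> gen_ring S"
  using gen_ring_diff[OF gen_ring.one gen_ring.one] by simp

lemma gen_ring_power: "x \<in> gen_ring S \<Longrightarrow> x ^ k \<in> gen_ring S"
  by (induct k) (auto intro: gen_ring.intros)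

lemma gen_ring_sum: "(\<And>x. x \<in> I \<Longrightarrow> f x \<in> gen_ring S) \<Longrightarrow> sum f I \<in> gen_ring S"
  by (induct I rule: infinite_finite_induct) (auto intro: gen_ring.intros gen_ring_zero)

lemma gen_ring_insert_exchange:
  assumes "a \<in> gen_ring (insert b S)" "b \<in> gen_ring (insert a S)"
  shows "gen_ring (insert a S) = gen_ring (insert b S)"
  using assms gen_ring_subset[of "insert a S" "insert b S"] gen_ring_subset[of "insert b S" "insert a S"]
  by (auto intro: gen_ring.base)

lemma coord_induct [consumes 1, case_names zero pos neg]:
  assumes "finite I"
    and zero: "\<And>c. \<forall>k\<in>I. c k = 0 \<Longrightarrow> P c"
    and pos: "\<And>c k. k \<in> I \<Longrightarrow> c k > 0 \<Longrightarrow> P (c - unitv k) \<Longrightarrow> P c"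
    and neg: "\<And>c k. k \<in> I \<Longrightarrow> c k < 0 \<Longrightarrow> P (c + unitv k) \<Longrightarrow> P c"
  shows "P (c :: nat \<Rightarrow> int)"
proof (induction "\<Sum>k\<in>I. nat \<bar>c k\<bar>" arbitrary: c rule: less_induct)
  case less
  show ?case
  proof (cases "\<forall>k\<in>I. c k = 0")
    case True
    then show ?thesis by (rule zero)
  next
    case False
    then obtain k where k: "k \<in> I" "c k \<noteq> 0" by auto
    have smaller: "P (c + vscale a (unitv k))" if "nat \<bar>c k + a\<bar> < nat \<bar>c k\<bar>" for a
    proof (rule less)
      let ?c' = "c + vscale a (unitv k)"
      have "(\<Sum>i\<in>I. nat \<bar>?c' i\<bar>) = nat \<bar>?c' k\<bar> + (\<Sum>i\<in>I - {k}. nat \<bar>?c' i\<bar>)"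
        by (rule sum.remove[OF assms(1) k(1)])
      also have "(\<Sum>i\<in>I - {k}. nat \<bar>?c' i\<bar>) = (\<Sum>i\<in>I - {k}. nat \<bar>c i\<bar>)"
        by (intro sum.cong refl) (simp add: unitv_apply)
      also have "nat \<bar>?c' k\<bar> + (\<Sum>i\<in>I - {k}. nat \<bar>c i\<bar>) < (\<Sum>i\<in>I. nat \<bar>c i\<bar>)"
        using sum.remove[OF assms(1) k(1), of "\<lambda>i. nat \<bar>c i\<bar>"] that by (simp add: unitv_apply)
      finally show "(\<Sum>i\<in>I. nat \<bar>?c' i\<bar>) < (\<Sum>i\<in>I. nat \<bar>c i\<bar>)" .
    qed
    show ?thesis
    proof (cases "c k > 0")
      case True
      have "c + vscale (- 1) (unitv k) = c - unitv k" by (rule ext) simp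
      then show ?thesis using pos[of k c] k(1) smaller[of "- 1"] True by simp
    next
      case False
      have "c + vscale 1 (unitv k) = c + unitv k" by (rule ext) simp
      then show ?thesis using neg[of k c] k smaller[of 1] False by simp
    qed
  qed
qed

section \<open>Quantum tori\<close>

locale quantum_torus =
  fixes m :: nat and L :: "nat \<Rightarrow> nat \<Rightarrow> int" and v :: "'f::division_ring"
    and X :: "(nat \<Rightarrow> int) \<Rightarrow> 'f"
  assumes skew: "\<forall>k\<in>{1..m}. \<forall>l\<in>{1..m}. L k l = - L l k"
    and embedding: "qtorus_embedding m L v X"
begin

abbreviation Lam :: "(nat \<Rightarrow> int) \<Rightarrow> (nat \<Rightarrow> int) \<Rightarrow> int" where
  "Lam \<equiv> bil m L"

lemma Lam_skew: "Lam a b = - Lam b a"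
  by (rule bil_skew[OF skew])

lemma Lam_self [simp]: "Lam a a = 0"
  using Lam_skew[of a a] by simp

lemma v_nonzero: "v \<noteq> 0"
proof
  assume "v = 0"
  have independent: "\<And>C K a. finite C \<Longrightarrow> finite K \<Longrightarrow> Ball C (vec_in m) \<Longrightarrow>
      (\<Sum>c\<in>C. \<Sum>k\<in>K. of_int (a c k) * v powi k * X c) = 0 \<Longrightarrow> \<forall>c\<in>C. \<forall>k\<in>K. a c k = (0::int)"
    using embedding unfolding qtorus_embedding_def by blast
  have "(\<Sum>c\<in>{0}. \<Sum>k\<in>{1::int}. of_int ((\<lambda>_ _. 1::int) c k) * v powi k * X c) = 0"
    using \<open>v = 0\<close> by simp
  then have "\<forall>c\<in>{0}. \<forall>k\<in>{1::int}. (1::int) = 0"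
    using independent[of "{0}" "{1}" "\<lambda>_ _. 1"] by blast
  then show False by simp
qed

lemma powi_v_add: "v powi a * v powi b = v powi (a + b)"
  using power_int_add[of v a b] v_nonzero by simp

lemma X_zero: "X 0 = 1"
proof -
  have "X (\<lambda>_. 0) = 1" using embedding unfolding qtorus_embedding_def by blast
  then show ?thesis by (simp add: zero_fun_def)
qed

lemma X_mult: "vec_in m c \<Longrightarrow> vec_in m c' \<Longrightarrow> X c * X c' = v powi (Lam c c') * X (c + c')"
proof -
  assume "vec_in m c" "vec_in m c'"
  moreover have "qtorus_rel m L v X" using embedding unfolding qtorus_embedding_def by blast
  ultimately show ?thesis unfolding qtorus_rel_def plus_fun_def by blast
qed

lemma X_commute_v: "vec_in m c \<Longrightarrow> v * X c = X c * v"
  using embedding unfolding qtorus_embedding_def by blast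

lemma X_commute_powi_v: "vec_in m c \<Longrightarrow> v powi k * X c = X c * v powi k"
  by (rule power_int_commuting_commutes[OF X_commute_v])

lemma X_mult_uminus: "vec_in m c \<Longrightarrow> X c * X (- c) = 1"
  using X_mult[of c "- c"] X_zero by (simp add: vec_in_uminus bil_uminus_right)

lemma X_uminus_mult: "vec_in m c \<Longrightarrow> X (- c) * X c = 1"
  using X_mult_uminus[of "- c"] by (simp add: vec_in_uminus)

lemma X_nonzero: "vec_in m c \<Longrightarrow> X c \<noteq> 0"
  using X_mult_uminus by force

lemma inverse_X: "vec_in m c \<Longrightarrow> inverse (X c) = X (- c)"
  using X_mult_uminus inverse_unique by blast

lemma X_swap: "vec_in m a \<Longrightarrow> vec_in m b \<Longrightarrow> X a * X b = v powi (2 * Lam a b) * (X b * X a)"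
  using X_mult[of a b] X_mult[of b a] Lam_skew[of b a]
  by (simp add: add.commute mult.assoc[symmetric] powi_v_add)

lemma X_split_right:
  assumes "vec_in m a" "vec_in m c"
  shows "X c = v powi (- Lam (c - a) a) * (X (c - a) * X a)"
proof -
  have cancel: "(c - a) + a = c" by (rule ext) simp
  have "X (c - a) * X a = v powi Lam (c - a) a * X c"
    using X_mult[OF vec_in_diff[OF assms(2,1)] assms(1)] unfolding cancel .
  then show ?thesis by (simp add: mult.assoc[symmetric] powi_v_add)
qed

lemma X_split_left:
  assumes "vec_in m a" "vec_in m c"
  shows "X c = v powi (- Lam a (c - a)) * (X a * X (c - a))"
proof -
  have cancel: "a + (c - a) = c" by (rule ext) simp
  have "X a * X (c - a) = v powi Lam a (c - a) * X c"
    using X_mult[OF assms(1) vec_in_diff[OF assms(2,1)]] unfolding cancel .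
  then show ?thesis by (simp add: mult.assoc[symmetric] powi_v_add)
qed

lemma X_power: "vec_in m c \<Longrightarrow> X c ^ k = X (vscale (int k) c)"
proof (induct k)
  case 0
  then show ?case using X_zero by (simp add: vscale_def zero_fun_def)
next
  case (Suc k)
  have "X c ^ Suc k = X (vscale (int k) c) * X c"
    using Suc by (simp only: power_Suc2)
  also have "\<dots> = X (vscale (int k) c + c)"
    using X_mult[of "vscale (int k) c" c] Suc(2) by (simp add: vec_in_vscale bil_vscale_left)
  also have "vscale (int k) c + c = vscale (int (Suc k)) c"
    by (rule ext) (simp add: algebra_simps)
  finally show ?case .
qed

lemma X_power_commute_X:
  assumes "vec_in m c" "vec_in m a"
  shows "X c ^ k * X a = v powi (2 * (int k * Lam c a)) * (X a * X c ^ k)"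
  using X_swap[of "vscale (int k) c" a] assms by (simp add: X_power vec_in_vscale bil_vscale_left)

lemma laurent_in_ZP:
  assumes "p \<in> laurent v"
  shows "p \<in> ZP m n v X"
proof -
  have "p = (\<Sum>c\<in>{0}. p * X c)" using X_zero by simp
  then show ?thesis
    unfolding ZP_def using assms by (intro CollectI exI[of _ "{0}"] exI[of _ "\<lambda>_. p"]) auto
qed

lemma ZP_commute_v:
  assumes "x \<in> ZP m n v X"
  shows "v * x = x * v"
proof -
  obtain C p where x: "x = (\<Sum>c\<in>C. p c * X c)" and C: "\<forall>c\<in>C. vec_in m c \<and> p c \<in> laurent v"
    using assms unfolding ZP_def by blast
  have "v * (p c * X c) = p c * X c * v" if "c \<in> C" for c
    using laurent_commute[of "p c" v v] X_commute_v[of c] C that by (metis mult.assoc)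
  then show ?thesis
    unfolding x by (simp add: sum_distrib_left sum_distrib_right)
qed

end

section \<open>Exchange vectors of a compatible pair\<close>

locale compatible_seed = quantum_torus m L v X
  for m and L and v :: "'f::division_ring" and X +
  fixes n :: nat and B :: "nat \<Rightarrow> nat \<Rightarrow> int" and d :: "nat \<Rightarrow> int"
  assumes n_le_m: "n \<le> m"
    and compatible: "compatible_pair m n L B"
    and d_pos_dvd: "\<forall>k\<in>{1..n}. d k > 0 \<and> (\<forall>p\<in>{1..m}. d k dvd B p k)"
begin

abbreviation \<beta> :: "nat \<Rightarrow> nat \<Rightarrow> int" where
  "\<beta> \<equiv> beta m B d"

lemma d_pos: "i \<in> {1..n} \<Longrightarrow> d i > 0"
  using d_pos_dvd by blast

lemma beta_apply: "\<beta> i k = (if 1 \<le> k \<and> k \<le> m then B k i div d i else 0)"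
  by (simp add: beta_def)

lemma vec_in_beta [intro]: "vec_in m (\<beta> i)"
  by (simp add: vec_in_def beta_apply)

lemma B_eq_d_beta: "i \<in> {1..n} \<Longrightarrow> k \<in> {1..m} \<Longrightarrow> B k i = d i * \<beta> i k"
  using d_pos_dvd by (auto simp: beta_apply)

text \<open>Compatibility means \<open>\<Lambda> b\<^sup>i = -d\<^sub>i' e\<^sub>i\<close> for some \<open>d\<^sub>i' > 0\<close>.\<close>
lemma Lam_beta_eq:
  assumes i: "i \<in> {1..n}"
  obtains \<delta> where "\<delta> > 0" "\<And>x. d i * Lam x (\<beta> i) = - x i * \<delta>"
proof -
  obtain dt where dt: "\<forall>l\<in>{1..n}. dt l > 0"
    "\<forall>k\<in>{1..m}. \<forall>l\<in>{1..n}. (\<Sum>p=1..m. L k p * B p l) = (if k = l then - dt l else 0)"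
    using compatible unfolding compatible_pair_def by blast
  have i_m: "i \<in> {1..m}" using i n_le_m by auto
  have "d i * Lam x (\<beta> i) = - x i * dt i" for x
  proof -
    have "d i * Lam x (\<beta> i) = (\<Sum>k=1..m. x k * (\<Sum>l=1..m. L k l * (d i * \<beta> i l)))"
      unfolding bil_def by (simp add: sum_distrib_left mult_ac)
    also have "\<dots> = (\<Sum>k=1..m. x k * (\<Sum>l=1..m. L k l * B l i))"
      using i by (simp add: B_eq_d_beta)
    also have "\<dots> = (\<Sum>k=1..m. x k * (if k = i then - dt i else 0))"
      using dt(2) i by (intro sum.cong refl) simp
    also have "\<dots> = - x i * dt i"
      using i_m by (simp add: if_distrib[of "\<lambda>y. x _ * y"] sum.delta cong: if_cong)
    finally show ?thesis .
  qed
  then show ?thesis using that dt(1) i by blast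
qed

lemma Lam_beta_right:
  assumes i: "i \<in> {1..n}"
  shows "Lam x (\<beta> i) = x i * Lam (unitv i) (\<beta> i)"
proof -
  obtain \<delta> where \<delta>: "\<And>x. d i * Lam x (\<beta> i) = - x i * \<delta>"
    using Lam_beta_eq[OF i] by blast
  have "d i * Lam (unitv i) (\<beta> i) = - \<delta>"
    using \<delta>[of "unitv i"] by (simp add: unitv_apply)
  moreover have "d i * (x i * Lam (unitv i) (\<beta> i)) = x i * (d i * Lam (unitv i) (\<beta> i))"
    by (simp add: mult_ac)
  ultimately have "d i * Lam x (\<beta> i) = d i * (x i * Lam (unitv i) (\<beta> i))"
    using \<delta>[of x] by simp
  then show ?thesis using d_pos[OF i] by simp
qed

lemma Lam_beta_left: "i \<in> {1..n} \<Longrightarrow> Lam (\<beta> i) x = - x i * Lam (unitv i) (\<beta> i)"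
  using Lam_beta_right[of i x] Lam_skew[of "\<beta> i" x] by simp

lemma Lam_unitv_beta_neg:
  assumes i: "i \<in> {1..n}"
  shows "Lam (unitv i) (\<beta> i) < 0"
proof -
  obtain \<delta> where "\<delta> > 0" "\<And>x. d i * Lam x (\<beta> i) = - x i * \<delta>"
    using Lam_beta_eq[OF i] by blast
  then have "d i * Lam (unitv i) (\<beta> i) < 0" by (simp add: unitv_apply)
  then show ?thesis using d_pos[OF i] by (simp add: mult_less_0_iff)
qed

lemma beta_diag: "i \<in> {1..n} \<Longrightarrow> \<beta> i i = 0"
  using Lam_beta_right[of i "\<beta> i"] Lam_unitv_beta_neg[of i] by simp

lemma B_diag: "i \<in> {1..n} \<Longrightarrow> B i i = 0"
  using B_eq_d_beta[of i i] beta_diag[of i] n_le_m by simp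

lemma sgn_beta_skew:
  assumes "i \<in> {1..n}" "k \<in> {1..n}"
  shows "sgn (\<beta> i k) = - sgn (\<beta> k i)"
proof -
  have "Lam (\<beta> k) (\<beta> i) = \<beta> k i * Lam (unitv i) (\<beta> i)"
    using Lam_beta_right[OF assms(1)] .
  moreover have "Lam (\<beta> i) (\<beta> k) = \<beta> i k * Lam (unitv k) (\<beta> k)"
    using Lam_beta_right[OF assms(2)] .
  ultimately have "\<beta> i k * Lam (unitv k) (\<beta> k) = - (\<beta> k i * Lam (unitv i) (\<beta> i))"
    using Lam_skew[of "\<beta> i" "\<beta> k"] by simp
  then have "sgn (\<beta> i k) * sgn (Lam (unitv k) (\<beta> k)) = - (sgn (\<beta> k i) * sgn (Lam (unitv i) (\<beta> i)))"
    by (simp only: sgn_mult[symmetric] sgn_minus)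
  then show ?thesis
    using Lam_unitv_beta_neg[OF assms(1)] Lam_unitv_beta_neg[OF assms(2)] by simp
qed

end

section \<open>Mutation in direction 1\<close>

locale seed_mutation = compatible_seed m L v X n B d
  for m L and v :: "'f::division_ring" and X n B d +
  fixes h :: "nat \<Rightarrow> nat \<Rightarrow> 'f" and eps :: int and X' :: "(nat \<Rightarrow> int) \<Rightarrow> 'f"
  assumes two_le_n: "2 \<le> n"
    and h_laurent: "\<forall>k\<in>{1..n}. \<forall>r\<in>{0..nat (d k)}. h k r \<in> laurent v"
    and h_ends: "\<forall>k\<in>{1..n}. h k 0 = 1 \<and> h k (nat (d k)) = 1"
    and eps: "eps = 1 \<or> eps = -1"
    and X'_rel: "qtorus_rel m (mut_Lambda m L B 1 eps) v X'"
    and X'_unitv_1: "X' (unitv 1) = mut_var m B d h X 1"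
    and X'_unitv: "\<forall>k\<in>{1..m}. k \<noteq> 1 \<longrightarrow> X' (unitv k) = X (unitv k)"
begin

abbreviation Lam1 :: "(nat \<Rightarrow> int) \<Rightarrow> (nat \<Rightarrow> int) \<Rightarrow> int" where
  "Lam1 \<equiv> bil m (mut_Lambda m L B 1 eps)"

abbreviation Y1 :: 'f where
  "Y1 \<equiv> mut_var m B d h X 1"

lemma one_in_n: "1 \<in> {1..n}" and one_in_m: "1 \<in> {1..m}"
  using two_le_n n_le_m by auto

lemma vec_in_unitv_1 [intro]: "vec_in m (unitv 1)"
  using one_in_m by auto

lemma d1_pos: "d 1 > 0"
  using d_pos[OF one_in_n] .

lemma beta_1_1: "\<beta> 1 1 = 0"
  using beta_diag[OF one_in_n] .

text \<open>The action \<open>c \<mapsto> E c\<close> of the mutation matrix \<open>E\<close> in direction 1 with sign \<open>s\<close>.\<close>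
definition mutE_vec :: "int \<Rightarrow> (nat \<Rightarrow> int) \<Rightarrow> nat \<Rightarrow> int" where
  "mutE_vec s c = (\<lambda>k. if k = 1 then - c 1 else c k + c 1 * (d 1 * pos (- s * \<beta> 1 k)))"

lemma mutE_vec_apply:
  "mutE_vec s c k = (if k = 1 then - c 1 else c k + c 1 * (d 1 * pos (- s * \<beta> 1 k)))"
  by (simp add: mutE_vec_def)

lemma vec_in_mutE_vec [intro]: "vec_in m c \<Longrightarrow> vec_in m (mutE_vec s c)"
  unfolding vec_in_def mutE_vec_apply by (auto simp: beta_apply pos_def)

lemma mutE_vec_add: "mutE_vec s (a + b) = mutE_vec s a + mutE_vec s b"
  and mutE_vec_diff: "mutE_vec s (a - b) = mutE_vec s a - mutE_vec s b"
  and mutE_vec_vscale: "mutE_vec s (vscale x a) = vscale x (mutE_vec s a)"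
  by (rule ext; simp add: mutE_vec_apply algebra_simps)+

lemma mutE_vec_fixed: "c 1 = 0 \<Longrightarrow> mutE_vec s c = c"
  by (rule ext) (simp add: mutE_vec_apply)

lemma mutE_vec_1: "mutE_vec s c 1 = - c 1"
  by (simp add: mutE_vec_apply)

text \<open>The two choices of sign give \<open>E\<close>'s that differ by a multiple of \<open>\<beta>\<^sup>1\<close> in the first
  column, and \<open>\<beta>\<^sup>1\<close> is \<open>\<Lambda>\<close>-orthogonal to every vector with vanishing first entry.\<close>
lemma Lam_mutE_vec_sign_indep:
  "Lam (mutE_vec 1 c) (mutE_vec 1 c') = Lam (mutE_vec (-1) c) (mutE_vec (-1) c')"
proof -
  have shift: "mutE_vec 1 x = mutE_vec (-1) x - vscale (x 1 * d 1) (\<beta> 1)" for x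
    using beta_1_1 by (intro ext) (simp add: mutE_vec_apply pos_uminus algebra_simps)
  define a b where "a = mutE_vec (-1) c" and "b = mutE_vec (-1) c'"
  have "a 1 = - c 1" "b 1 = - c' 1" by (simp_all add: a_def b_def mutE_vec_1)
  then have "(c' 1 * d 1) * Lam a (\<beta> 1) + (c 1 * d 1) * Lam (\<beta> 1) b = 0"
    using Lam_beta_right[OF one_in_n, of a] Lam_beta_left[OF one_in_n, of b] by (simp add: algebra_simps)
  then show ?thesis
    unfolding shift a_def[symmetric] b_def[symmetric] by (simp add: bil_linear algebra_simps)
qed

lemma mutE_sum_eq_mutE_vec:
  assumes p: "p \<in> {1..m}"
  shows "(\<Sum>k=1..m. mutE B 1 eps p k * c k) = mutE_vec eps c p"
proof -
  have "(\<Sum>k=1..m. mutE B 1 eps p k * c k) = mutE B 1 eps p 1 * c 1 +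
        (\<Sum>k\<in>{1..m}-{1}. mutE B 1 eps p k * c k)"
    by (rule sum.remove[OF _ one_in_m]) simp
  also have "(\<Sum>k\<in>{1..m}-{1}. mutE B 1 eps p k * c k) = (\<Sum>k\<in>{1..m}-{1}. if p = k then c k else 0)"
    by (intro sum.cong refl) (auto simp: mutE_def)
  also have "\<dots> = (if p \<in> {1..m}-{1} then c p else 0)"
    by (simp add: sum.delta)
  finally have sum: "(\<Sum>k=1..m. mutE B 1 eps p k * c k) =
     mutE B 1 eps p 1 * c 1 + (if p \<in> {1..m}-{1} then c p else 0)" .
  have "pos (- eps * B p 1) = d 1 * pos (- eps * \<beta> 1 p)"
    using B_eq_d_beta[OF one_in_n p] pos_mult_pos[OF d1_pos, of "- eps * \<beta> 1 p"]
    by (simp add: algebra_simps)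
  then show ?thesis
    using sum p by (cases "p = 1") (simp_all add: mutE_def mutE_vec_apply algebra_simps)
qed

lemma Lam1_eq: "Lam1 c c' = Lam (mutE_vec eps c) (mutE_vec eps c')"
proof -
  let ?E = "mutE B 1 eps"
  have "Lam1 c c' = (\<Sum>k=1..m. \<Sum>l=1..m. \<Sum>p=1..m. \<Sum>q=1..m. c k * (?E p k * L p q * ?E q l) * c' l)"
    unfolding bil_def mut_Lambda_def by (simp add: sum_distrib_left sum_distrib_right)
  also have "\<dots> = (\<Sum>p=1..m. \<Sum>q=1..m. \<Sum>k=1..m. \<Sum>l=1..m. c k * (?E p k * L p q * ?E q l) * c' l)"
    by (subst sum.swap, subst (2) sum.swap, rule sum.cong[OF refl], subst sum.swap,
        rule sum.cong[OF refl], subst sum.swap, rule refl)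
  also have "\<dots> = (\<Sum>p=1..m. \<Sum>q=1..m. (\<Sum>k=1..m. ?E p k * c k) * L p q * (\<Sum>l=1..m. ?E q l * c' l))"
    by (simp add: sum_distrib_left sum_distrib_right mult_ac)
  also have "\<dots> = (\<Sum>p=1..m. \<Sum>q=1..m. mutE_vec eps c p * L p q * mutE_vec eps c' q)"
    by (intro sum.cong refl) (simp only: mutE_sum_eq_mutE_vec)
  finally show ?thesis unfolding bil_def .
qed

lemma Lam1_eq_sign: "s = 1 \<or> s = -1 \<Longrightarrow> Lam1 c c' = Lam (mutE_vec s c) (mutE_vec s c')"
  using Lam1_eq Lam_mutE_vec_sign_indep eps by auto

lemma Lam1_eq_Lam: "c 1 = 0 \<Longrightarrow> c' 1 = 0 \<Longrightarrow> Lam1 c c' = Lam c c'"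
  by (simp add: Lam1_eq mutE_vec_fixed)

lemma X'_mult: "vec_in m c \<Longrightarrow> vec_in m c' \<Longrightarrow> X' c * X' c' = v powi (Lam1 c c') * X' (c + c')"
  using X'_rel unfolding qtorus_rel_def plus_fun_def by blast

lemma X'_split_left:
  assumes "vec_in m a" "vec_in m c"
  shows "X' c = v powi (- Lam1 a (c - a)) * (X' a * X' (c - a))"
proof -
  have cancel: "a + (c - a) = c" by (rule ext) simp
  have "X' a * X' (c - a) = v powi Lam1 a (c - a) * X' c"
    using X'_mult[OF assms(1) vec_in_diff[OF assms(2,1)]] unfolding cancel .
  then show ?thesis by (simp add: mult.assoc[symmetric] powi_v_add)
qed

lemma X'_zero: "X' 0 = 1"
proof -
  have two: "2 \<in> {1..m}" using two_le_n n_le_m by auto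
  then have e2: "vec_in m (unitv 2)" by (rule vec_in_unitv)
  have "X' (unitv 2) \<noteq> 0" using X'_unitv two X_nonzero[OF e2] by auto
  moreover have "X' (unitv 2) * X' 0 = X' (unitv 2) * 1"
    using X'_mult[OF e2 vec_in_zero] by simp
  ultimately show ?thesis by simp
qed

text \<open>\<open>X'\<close> and \<open>X\<close> agree on the unit vectors \<open>e\<^sub>k\<close>, \<open>k \<noteq> 1\<close>, and \<open>\<Lambda>\<^sub>1 = \<Lambda>\<close> on their span.\<close>
lemma X'_eq_X:
  assumes "vec_in m c" "c 1 = 0"
  shows "X' c = X c"
  using finite_atLeastAtMost[of 2 m] assms
proof (induction c rule: coord_induct)
  case (zero c)
  have "\<forall>k\<in>{1..m}. c k = 0"
  proof
    fix k assume "k \<in> {1..m}"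
    then show "c k = 0" using zero by (cases "k = 1") auto
  qed
  then have "c = 0" using zero.prems by (intro vec_in_eq_zero)
  then show ?case by (simp only: X_zero X'_zero)
next
  case (pos c k)
  have k: "vec_in m (unitv k)" "unitv k 1 = 0" "X' (unitv k) = X (unitv k)"
    using pos.hyps(1) X'_unitv by (auto simp: unitv_apply)
  have c': "vec_in m (c - unitv k)" "(c - unitv k) 1 = 0"
    using pos.prems k by auto
  have IH: "X' (c - unitv k) = X (c - unitv k)"
    using pos.IH[OF c'] by (simp add: fun_diff_def)
  have sum: "(c - unitv k) + unitv k = c" by (rule ext) simp
  have "v powi Lam (c - unitv k) (unitv k) * X' c = X' (c - unitv k) * X' (unitv k)"
    using X'_mult[OF c'(1) k(1)] Lam1_eq_Lam[of "c - unitv k" "unitv k", OF c'(2) k(2)] sum by simp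
  also have "\<dots> = v powi Lam (c - unitv k) (unitv k) * X c"
    using X_mult[OF c'(1) k(1)] IH k(3) sum by simp
  finally show ?case using v_nonzero by simp
next
  case (neg c k)
  have k: "vec_in m (unitv k)" "unitv k 1 = 0" "X' (unitv k) = X (unitv k)"
    using neg.hyps(1) X'_unitv by (auto simp: unitv_apply)
  have c': "vec_in m (c + unitv k)" "(c + unitv k) 1 = 0"
    using neg.prems k by auto
  have IH: "X' (c + unitv k) = X (c + unitv k)"
    using neg.IH[OF c'] by (simp add: plus_fun_def)
  have "X' c * X (unitv k) = v powi Lam c (unitv k) * X' (c + unitv k)"
    using X'_mult[OF neg.prems(1) k(1)] Lam1_eq_Lam[of c "unitv k", OF neg.prems(2) k(2)] k(3) by simp
  also have "\<dots> = X c * X (unitv k)"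
    using X_mult[OF neg.prems(1) k(1)] IH by simp
  finally show ?case using X_nonzero[OF k(1)] by simp
qed

lemma h_1_laurent: "r \<in> {0..nat (d 1)} \<Longrightarrow> h 1 r \<in> laurent v"
  using h_laurent one_in_n by blast

definition Y1_exp :: "nat \<Rightarrow> nat \<Rightarrow> int" where
  "Y1_exp r = (\<lambda>k. int r * pos (\<beta> 1 k) + (d 1 - int r) * pos (- \<beta> 1 k) - unitv 1 k)"

lemma Y1_eq_sum: "Y1 = (\<Sum>r\<in>{0..nat (d 1)}. h 1 r * X (Y1_exp r))"
  by (simp add: mut_var_def Y1_exp_def)

lemma vec_in_Y1_exp [intro]: "vec_in m (Y1_exp r)"
  unfolding vec_in_def Y1_exp_def using one_in_m by (auto simp: beta_apply pos_def unitv_apply)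

lemma Y1_exp_1: "Y1_exp r 1 = -1"
  using beta_1_1 by (simp add: Y1_exp_def pos_def unitv_apply)

lemma Y1_exp_affine: "Y1_exp r = Y1_exp 0 + vscale (int r) (\<beta> 1)"
  by (rule ext) (simp add: Y1_exp_def pos_uminus algebra_simps)

lemma Y1_commute_powi_v: "v powi k * Y1 = Y1 * v powi k"
proof -
  have "v * (h 1 r * X (Y1_exp r)) = h 1 r * X (Y1_exp r) * v" if "r \<in> {0..nat (d 1)}" for r
    using laurent_commute[OF h_1_laurent[OF that], of v] X_commute_v[OF vec_in_Y1_exp]
    by (metis mult.assoc)
  then have "v * Y1 = Y1 * v"
    unfolding Y1_eq_sum by (simp add: sum_distrib_left sum_distrib_right)
  then show ?thesis by (rule power_int_commuting_commutes)
qed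

text \<open>All exponents of \<open>Y\<^sub>1\<close> differ by multiples of \<open>\<beta>\<^sup>1\<close>, which is \<open>\<Lambda>\<close>-orthogonal to \<open>c\<close>;
  hence all terms of \<open>Y\<^sub>1\<close> quasi-commute with \<open>X(c)\<close> with the same exponent.\<close>
lemma Y1_commute_X:
  assumes c: "vec_in m c" "c 1 = 0"
  shows "Y1 * X c = v powi (2 * Lam (Y1_exp 0) c) * (X c * Y1)"
proof -
  let ?q = "v powi (2 * Lam (Y1_exp 0) c)"
  have term_swap: "h 1 r * X (Y1_exp r) * X c = ?q * (X c * (h 1 r * X (Y1_exp r)))"
    if r: "r \<in> {0..nat (d 1)}" for r
  proof -
    have "Lam (Y1_exp r) c = Lam (Y1_exp 0) c"
      using Y1_exp_affine[of r] Lam_beta_left[OF one_in_n, of c] c(2)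
      by (simp add: bil_add_left bil_vscale_left)
    then have swap: "X (Y1_exp r) * X c = ?q * (X c * X (Y1_exp r))"
      using X_swap[OF vec_in_Y1_exp c(1)] by simp
    have hc: "h 1 r * X c = X c * h 1 r"
      by (rule laurent_commute[OF h_1_laurent[OF r] X_commute_v[OF c(1)]])
    have hq: "h 1 r * ?q = ?q * h 1 r"
      by (rule laurent_commute[OF h_1_laurent[OF r]]) (simp add: power_int_commuting_commutes)
    have "h 1 r * X (Y1_exp r) * X c = (h 1 r * ?q) * X c * X (Y1_exp r)"
      by (simp only: mult.assoc swap)
    also have "\<dots> = ?q * (h 1 r * X c) * X (Y1_exp r)"
      by (simp only: hq mult.assoc)
    finally show ?thesis
      by (simp only: hc mult.assoc)
  qed
  have "Y1 * X c = (\<Sum>r\<in>{0..nat (d 1)}. h 1 r * X (Y1_exp r) * X c)"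
    unfolding Y1_eq_sum by (simp add: sum_distrib_right)
  also have "\<dots> = (\<Sum>r\<in>{0..nat (d 1)}. ?q * (X c * (h 1 r * X (Y1_exp r))))"
    by (rule sum.cong[OF refl term_swap])
  also have "\<dots> = ?q * (X c * Y1)"
    unfolding Y1_eq_sum by (simp add: sum_distrib_left)
  finally show ?thesis .
qed

lemma Y1_power_commute_X:
  assumes "vec_in m c" "c 1 = 0"
  obtains k where "Y1 ^ p * X c = v powi k * (X c * Y1 ^ p)"
proof -
  have "\<exists>k. Y1 ^ p * X c = v powi k * (X c * Y1 ^ p)"
  proof (induct p)
    case 0
    then show ?case by (intro exI[of _ 0]) simp
  next
    case (Suc p)
    then obtain k where k: "Y1 ^ p * X c = v powi k * (X c * Y1 ^ p)" by blast
    define k0 where "k0 = 2 * Lam (Y1_exp 0) c"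
    have k0: "Y1 * X c = v powi k0 * (X c * Y1)"
      unfolding k0_def by (rule Y1_commute_X[OF assms])
    have commute: "v powi k0 * Y1 ^ p = Y1 ^ p * v powi k0"
      using power_commuting_commutes[of Y1 "v powi k0" p] Y1_commute_powi_v[of k0] by simp
    have "Y1 ^ Suc p * X c = Y1 ^ p * (Y1 * X c)"
      by (simp add: mult.assoc[symmetric] power_commutes)
    also have "\<dots> = v powi k0 * (Y1 ^ p * X c) * Y1"
      unfolding k0 by (simp add: mult.assoc[symmetric] commute)
    also have "\<dots> = v powi (k0 + k) * (X c * Y1 ^ Suc p)"
      unfolding k by (simp add: mult.assoc powi_v_add[symmetric] power_Suc2 del: power_Suc)
    finally show ?case by blast
  qed
  then show ?thesis using that by blast
qed

end

section \<open>Mutations in directions 1 and \<open>j\<close>\<close>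

lemma pos_exchange_sign:
  fixes x t eps :: int
  assumes "eps = 1 \<or> eps = -1" "t \<noteq> 0"
  shows "x * pos (eps * t) + pos (- eps * x) * t = t * pos (- (if t > 0 then -1 else 1) * x)"
  using assms by (cases "eps = 1"; cases "t > 0"; cases "x \<ge> 0") (auto simp: pos_def max_def algebra_simps)

locale exchange = seed_mutation m L v X n B d h eps X'
  for m L and v :: "'f::division_ring" and X n B d h eps X' +
  fixes j :: nat
  assumes j: "j \<in> {2..n}"
begin

abbreviation t :: int where
  "t \<equiv> \<beta> j 1"

abbreviation B1 :: "nat \<Rightarrow> nat \<Rightarrow> int" where
  "B1 \<equiv> mut_B m n B 1 eps"

abbreviation Yj :: 'f where
  "Yj \<equiv> mut_var m B d h X j"

abbreviation Zj :: 'f where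
  "Zj \<equiv> mut_var m B1 d h X' j"

abbreviation \<beta>' :: "nat \<Rightarrow> int" where
  "\<beta>' \<equiv> beta m B1 d j"

lemma j_ne_1: "j \<noteq> 1" and j_in_n: "j \<in> {1..n}" and j_in_m: "j \<in> {1..m}"
  using j n_le_m by auto

lemma vec_in_unitv_j [intro]: "vec_in m (unitv j)"
  using j_in_m by auto

lemma dj_pos: "d j > 0"
  using d_pos[OF j_in_n] .

lemma beta_j_j: "\<beta> j j = 0"
  using beta_diag[OF j_in_n] .

lemma sgn_beta_1_j: "sgn (\<beta> 1 j) = - sgn t"
  using sgn_beta_skew[OF one_in_n j_in_n] .

definition eps0 :: int where
  "eps0 = (if t > 0 then -1 else 1)"

abbreviation E0 :: "(nat \<Rightarrow> int) \<Rightarrow> nat \<Rightarrow> int" where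
  "E0 \<equiv> mutE_vec eps0"

lemma E0_j: "t \<noteq> 0 \<Longrightarrow> E0 c j = c j"
  using sgn_beta_1_j j_ne_1
  by (cases "t > 0") (auto simp: mutE_vec_apply eps0_def pos_def sgn_if split: if_splits)

lemma Lam1_eq_E0: "Lam1 c c' = Lam (E0 c) (E0 c')"
  by (rule Lam1_eq_sign) (simp add: eps0_def)

lemma mut_B_col_j:
  assumes k: "k \<in> {1..m}"
  shows "B1 k j = (if k = 1 then - B 1 j
           else B k j + B k 1 * pos (eps * B 1 j) + pos (- eps * B k 1) * B 1 j)"
proof -
  let ?E = "mutE B 1 eps" and ?F = "mutF B 1 eps"
  define G where "G p = B p j + B p 1 * pos (eps * B 1 j)" for p
  have F_col: "(\<Sum>q=1..n. B p q * ?F q j) = G p" for p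
  proof -
    have "(\<Sum>q=1..n. B p q * ?F q j) = B p 1 * ?F 1 j + (\<Sum>q\<in>{1..n}-{1}. B p q * ?F q j)"
      by (rule sum.remove[OF _ one_in_n]) simp
    also have "(\<Sum>q\<in>{1..n}-{1}. B p q * ?F q j) = (\<Sum>q\<in>{1..n}-{1}. if q = j then B p j else 0)"
      by (intro sum.cong refl) (auto simp: mutF_def)
    also have "\<dots> = B p j" using j_in_n j_ne_1 by (simp add: sum.delta)
    finally show ?thesis using j_ne_1 by (simp add: G_def mutF_def algebra_simps)
  qed
  have "B1 k j = (\<Sum>p=1..m. ?E k p * G p)"
    unfolding mut_B_def by (simp add: mult.assoc sum_distrib_left[symmetric] F_col)
  also have "\<dots> = ?E k 1 * G 1 + (\<Sum>p\<in>{1..m}-{1}. ?E k p * G p)"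
    by (rule sum.remove[OF _ one_in_m]) simp
  also have "(\<Sum>p\<in>{1..m}-{1}. ?E k p * G p) = (\<Sum>p\<in>{1..m}-{1}. if k = p then G k else 0)"
    by (intro sum.cong refl) (auto simp: mutE_def)
  also have "\<dots> = (if k \<in> {1..m}-{1} then G k else 0)"
    by (simp add: sum.delta')
  finally show ?thesis
    using k B_diag[OF one_in_n] by (auto simp: mutE_def G_def algebra_simps)
qed

lemma beta'_apply: "\<beta>' k = (if 1 \<le> k \<and> k \<le> m then
    (if k = 1 then - t else \<beta> j k + d 1 * (\<beta> 1 k * pos (eps * t) + pos (- eps * \<beta> 1 k) * t))
    else 0)"
proof (cases "1 \<le> k \<and> k \<le> m")
  case True
  then have k: "k \<in> {1..m}" by simp
  have B1j: "B 1 j = d j * t" using B_eq_d_beta[OF j_in_n one_in_m] .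
  have "pos (eps * B 1 j) = d j * pos (eps * t)"
    using pos_mult_pos[OF dj_pos, of "eps * t"] B1j by (simp add: algebra_simps)
  moreover have "pos (- eps * B k 1) = d 1 * pos (- eps * \<beta> 1 k)"
    using pos_mult_pos[OF d1_pos, of "- eps * \<beta> 1 k"] B_eq_d_beta[OF one_in_n k]
    by (simp add: algebra_simps)
  ultimately have "B1 k j = d j * (if k = 1 then - t
      else \<beta> j k + d 1 * (\<beta> 1 k * pos (eps * t) + pos (- eps * \<beta> 1 k) * t))"
    using mut_B_col_j[OF k] B1j B_eq_d_beta[OF j_in_n k] B_eq_d_beta[OF one_in_n k]
    by (simp add: algebra_simps)
  then show ?thesis
    using True dj_pos by (simp add: beta_def)
next
  case False
  then show ?thesis by (simp only: beta_def if_not_P[OF False] if_False)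
qed

lemma vec_in_beta' [intro]: "vec_in m \<beta>'"
  unfolding vec_in_def beta'_apply by simp

lemma beta'_1: "\<beta>' 1 = - t"
  using one_in_m by (simp add: beta'_apply)

lemma beta'_eq_beta: "t = 0 \<Longrightarrow> \<beta>' = \<beta> j"
  by (rule ext) (auto simp: beta'_apply beta_apply pos_def)

text \<open>This is where the choice of the sign \<open>eps0\<close> matters.\<close>
lemma E0_beta': "t \<noteq> 0 \<Longrightarrow> E0 \<beta>' = \<beta> j"
proof (rule ext)
  fix k assume t: "t \<noteq> 0"
  show "E0 \<beta>' k = \<beta> j k"
  proof (cases "1 \<le> k \<and> k \<le> m")
    case True
    have "\<beta> 1 k * pos (eps * t) + pos (- eps * \<beta> 1 k) * t = t * pos (- eps0 * \<beta> 1 k)"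
      using pos_exchange_sign[OF eps t, of "\<beta> 1 k"] by (simp add: eps0_def)
    then show ?thesis
      using True by (cases "k = 1") (simp_all add: mutE_vec_apply beta'_apply algebra_simps)
  next
    case False
    then show ?thesis
      using one_in_m by (auto simp: mutE_vec_apply beta'_apply beta_apply pos_def)
  qed
qed

lemma beta'_j: "t \<noteq> 0 \<Longrightarrow> \<beta>' j = 0"
  using E0_j[of \<beta>'] E0_beta' beta_j_j by simp

abbreviation inv_gens :: "'f set" where
  "inv_gens \<equiv> {y. \<exists>k\<in>{2..n}. k \<noteq> j \<and> (y = X (unitv k) \<or> y = inverse (X (unitv k)))}"

text \<open>\<open>base_ring\<close> is the ring \<open>A\<close> of the proof idea above.\<close>
definition base_gens :: "'f set" where
  "base_gens = ZP m n v X \<union> ({X (unitv 1), Y1, X (unitv j)} \<union> inv_gens)"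

definition base_ring :: "'f set" where
  "base_ring = gen_ring base_gens"

lemma base_ring_add: "x \<in> base_ring \<Longrightarrow> y \<in> base_ring \<Longrightarrow> x + y \<in> base_ring"
  and base_ring_diff: "x \<in> base_ring \<Longrightarrow> y \<in> base_ring \<Longrightarrow> x - y \<in> base_ring"
  and base_ring_mult: "x \<in> base_ring \<Longrightarrow> y \<in> base_ring \<Longrightarrow> x * y \<in> base_ring"
  and base_ring_power: "x \<in> base_ring \<Longrightarrow> x ^ k \<in> base_ring"
  and base_ring_one: "1 \<in> base_ring"
  and base_ring_zero: "0 \<in> base_ring"
  and base_ring_sum: "(\<And>x. x \<in> I \<Longrightarrow> f x \<in> base_ring) \<Longrightarrow> sum f I \<in> base_ring"
  unfolding base_ring_def
  by (simp_all add: gen_ring.add gen_ring.one gen_ring_diff gen_ring.mult gen_ring_power gen_ring_zero gen_ring_sum)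

lemma base_gens_in_base_ring: "x \<in> base_gens \<Longrightarrow> x \<in> base_ring"
  unfolding base_ring_def by (rule gen_ring.base)

lemma ZP_in_base_ring: "x \<in> ZP m n v X \<Longrightarrow> x \<in> base_ring"
  and X1_in_base_ring: "X (unitv 1) \<in> base_ring"
  and Y1_in_base_ring: "Y1 \<in> base_ring"
  and Xj_in_base_ring: "X (unitv j) \<in> base_ring"
  by (simp_all add: base_gens_in_base_ring base_gens_def)

lemma laurent_in_base_ring: "p \<in> laurent v \<Longrightarrow> p \<in> base_ring"
  by (intro ZP_in_base_ring laurent_in_ZP)

lemma powi_v_in_base_ring: "v powi k \<in> base_ring"
  by (rule laurent_in_base_ring[OF laurent_powi])

lemma X_in_base_ring:
  assumes "vec_in m c" "c 1 \<ge> 0" "c j \<ge> 0"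
  shows "X c \<in> base_ring"
  using finite_atLeastAtMost[of 1 n] assms
proof (induction c rule: coord_induct)
  case (zero c)
  then show ?case by (intro ZP_in_base_ring X_in_ZP)
next
  case (pos c k)
  have k: "vec_in m (unitv k)" using pos.hyps(1) n_le_m by auto
  have Xk: "X (unitv k) \<in> base_ring"
  proof (cases "k = 1 \<or> k = j")
    case False
    then have "k \<in> {2..n}" using pos.hyps(1) by auto
    then have "X (unitv k) \<in> base_gens" using False unfolding base_gens_def by blast
    then show ?thesis by (rule base_gens_in_base_ring)
  qed (use X1_in_base_ring Xj_in_base_ring in auto)
  have c': "vec_in m (c - unitv k)" "(c - unitv k) 1 \<ge> 0" "(c - unitv k) j \<ge> 0"
    using pos.prems pos.hyps k by (auto simp: unitv_apply)
  show ?case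
    using X_split_right[OF k pos.prems(1)] pos.IH[OF c'] Xk powi_v_in_base_ring base_ring_mult
    by metis
next
  case (neg c k)
  have "k \<noteq> 1" "k \<noteq> j" using neg.hyps neg.prems by auto
  then have k: "vec_in m (unitv k)" "k \<noteq> 1" "k \<noteq> j" "k \<in> {2..n}"
    using neg.hyps n_le_m by auto
  have "inverse (X (unitv k)) \<in> base_gens" using k unfolding base_gens_def by blast
  then have Xk: "X (- unitv k) \<in> base_ring"
    using inverse_X[OF k(1)] base_gens_in_base_ring by simp
  have c': "vec_in m (c + unitv k)" "(c + unitv k) 1 \<ge> 0" "(c + unitv k) j \<ge> 0"
    using neg.prems k by (auto simp: unitv_apply)
  have "c - - unitv k = c + unitv k" by (rule ext) simp
  then show ?case
    using X_split_right[OF vec_in_uminus[OF k(1)] neg.prems(1)] neg.IH[OF c'] Xk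
      powi_v_in_base_ring base_ring_mult
    by metis
qed

lemma X'_in_base_ring:
  assumes "vec_in m c" "c 1 \<ge> 0" "c j \<ge> 0"
  shows "X' c \<in> base_ring"
  using finite.insertI[OF finite.emptyI, of 1] assms
proof (induction c rule: coord_induct)
  case (zero c)
  then show ?case using X'_eq_X X_in_base_ring by simp
next
  case (pos c k)
  then have k: "k = 1" by simp
  have "vec_in m (c - unitv k)" "(c - unitv k) 1 \<ge> 0" "(c - unitv k) j \<ge> 0"
    using pos.prems pos.hyps k j_ne_1 by (auto simp: unitv_apply)
  note IH = pos.IH[OF this, unfolded k]
  show ?case
    using X'_split_left[OF vec_in_unitv_1 pos.prems(1)] IH Y1_in_base_ring powi_v_in_base_ring
      base_ring_mult
    unfolding X'_unitv_1 by metis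
next
  case (neg c k)
  then show ?case by simp
qed

lemma base_ring_commute_v:
  assumes "x \<in> base_ring"
  shows "v * x = x * v"
  using assms unfolding base_ring_def
proof (induct rule: gen_ring.induct)
  case (base x)
  then show ?case
    unfolding base_gens_def
  proof (elim UnE)
    assume "x \<in> inv_gens"
    then obtain k where "k \<in> {2..n}" "x = X (unitv k) \<or> x = inverse (X (unitv k))" by blast
    moreover from this have "vec_in m (unitv k)" using n_le_m by auto
    ultimately show ?thesis
      using X_commute_v mult_commute_imp_mult_inverse_commute by metis
  qed (use ZP_commute_v X_commute_v Y1_commute_powi_v[of 1] in auto)
next
  case (mult x y)
  then show ?case by (metis mult.assoc)
qed (simp_all add: algebra_simps)

lemma base_ring_commute_laurent: "p \<in> laurent v \<Longrightarrow> x \<in> base_ring \<Longrightarrow> p * x = x * p"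
  by (rule laurent_commute[OF _ base_ring_commute_v])

definition Xj_ideal :: "'f set" where
  "Xj_ideal = (\<lambda>y. X (unitv j) * y) ` base_ring"

definition Xj_quasicentral :: "'f set" where
  "Xj_quasicentral = {a \<in> base_ring. \<exists>k. a * X (unitv j) = v powi k * (X (unitv j) * a)}"

lemma Xj_ideal_add: "x \<in> Xj_ideal \<Longrightarrow> y \<in> Xj_ideal \<Longrightarrow> x + y \<in> Xj_ideal"
  and Xj_ideal_diff: "x \<in> Xj_ideal \<Longrightarrow> y \<in> Xj_ideal \<Longrightarrow> x - y \<in> Xj_ideal"
  unfolding Xj_ideal_def
  by (auto simp: distrib_left[symmetric] right_diff_distrib[symmetric]
      intro!: imageI base_ring_add base_ring_diff)

lemma Xj_ideal_zero: "0 \<in> Xj_ideal"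
  unfolding Xj_ideal_def using base_ring_zero by force

lemma Xj_ideal_sum: "(\<And>x. x \<in> I \<Longrightarrow> f x \<in> Xj_ideal) \<Longrightarrow> sum f I \<in> Xj_ideal"
  by (induct I rule: infinite_finite_induct) (auto intro: Xj_ideal_add Xj_ideal_zero)

lemma Xj_ideal_mult_right: "x \<in> Xj_ideal \<Longrightarrow> a \<in> base_ring \<Longrightarrow> x * a \<in> Xj_ideal"
  unfolding Xj_ideal_def by (auto simp: mult.assoc intro!: imageI base_ring_mult)

lemma Xj_ideal_cancel: "X (unitv j) * y \<in> Xj_ideal \<Longrightarrow> y \<in> base_ring"
  unfolding Xj_ideal_def using X_nonzero[OF vec_in_unitv_j] by auto

lemma X_in_Xj_ideal:
  assumes c: "vec_in m c" "c 1 \<ge> 0" "c j \<ge> 1"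
  shows "X c \<in> Xj_ideal"
proof -
  have c': "vec_in m (c - unitv j)" "(c - unitv j) 1 \<ge> 0" "(c - unitv j) j \<ge> 0"
    using c j_ne_1 by (auto simp: unitv_apply)
  have "X c = v powi (- Lam (unitv j) (c - unitv j)) * (X (unitv j) * X (c - unitv j))"
    by (rule X_split_left[OF vec_in_unitv_j c(1)])
  also have "\<dots> = X (unitv j) * (v powi (- Lam (unitv j) (c - unitv j)) * X (c - unitv j))"
    by (simp only: mult.assoc[symmetric] X_commute_powi_v[OF vec_in_unitv_j])
  finally have "X c = X (unitv j) * (v powi (- Lam (unitv j) (c - unitv j)) * X (c - unitv j))" .
  then show ?thesis
    unfolding Xj_ideal_def
    using X_in_base_ring[OF c'] powi_v_in_base_ring base_ring_mult by blast
qed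

lemma quasicentral_in_base_ring: "a \<in> Xj_quasicentral \<Longrightarrow> a \<in> base_ring"
  by (simp add: Xj_quasicentral_def)

lemma quasicentral_mult:
  assumes "a \<in> Xj_quasicentral" "b \<in> Xj_quasicentral"
  shows "a * b \<in> Xj_quasicentral"
proof -
  obtain k1 k2 where k1: "a * X (unitv j) = v powi k1 * (X (unitv j) * a)"
    and k2: "b * X (unitv j) = v powi k2 * (X (unitv j) * b)"
    and ab: "a \<in> base_ring" "b \<in> base_ring"
    using assms by (auto simp: Xj_quasicentral_def)
  have va: "a * v powi k2 = v powi k2 * a"
    using base_ring_commute_laurent[OF laurent_powi ab(1)] by simp
  have "a * b * X (unitv j) = (a * v powi k2) * X (unitv j) * b"
    by (simp only: mult.assoc k2)
  also have "\<dots> = v powi k2 * (a * X (unitv j)) * b"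
    by (simp only: va mult.assoc)
  also have "\<dots> = v powi (k2 + k1) * (X (unitv j) * (a * b))"
    by (simp only: k1 mult.assoc powi_v_add[symmetric])
  finally show ?thesis
    unfolding Xj_quasicentral_def using ab base_ring_mult by blast
qed

lemma quasicentral_power: "a \<in> Xj_quasicentral \<Longrightarrow> a ^ k \<in> Xj_quasicentral"
proof (induct k)
  case 0
  then show ?case
    unfolding Xj_quasicentral_def using base_ring_one by (auto intro!: exI[of _ 0])
next
  case (Suc k)
  then show ?case using quasicentral_mult by simp
qed

lemma X_quasicentral: "vec_in m c \<Longrightarrow> X c \<in> base_ring \<Longrightarrow> X c \<in> Xj_quasicentral"
  unfolding Xj_quasicentral_def using X_swap[OF _ vec_in_unitv_j] by blast

lemma laurent_quasicentral:
  assumes "p \<in> laurent v"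
  shows "p \<in> Xj_quasicentral"
proof -
  have "p * X (unitv j) = v powi 0 * (X (unitv j) * p)"
    using base_ring_commute_laurent[OF assms Xj_in_base_ring] by simp
  then show ?thesis
    unfolding Xj_quasicentral_def using laurent_in_base_ring[OF assms] by blast
qed

lemma Y1_quasicentral: "Y1 \<in> Xj_quasicentral"
  unfolding Xj_quasicentral_def
  using Y1_in_base_ring Y1_commute_X[OF vec_in_unitv_j] j_ne_1 by (auto simp: unitv_apply)

lemma quasicentral_move:
  assumes "a \<in> Xj_quasicentral"
  obtains k where "\<And>z. a * (X (unitv j) * z) = X (unitv j) * (v powi k * a * z)"
proof -
  obtain k where k: "a * X (unitv j) = v powi k * (X (unitv j) * a)"
    using assms by (auto simp: Xj_quasicentral_def)
  have "a * (X (unitv j) * z) = (v powi k * X (unitv j)) * a * z" for z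
    by (simp only: mult.assoc[symmetric] k)
  also have "(v powi k * X (unitv j)) * a * z = X (unitv j) * (v powi k * a * z)" for z
    by (simp only: X_commute_powi_v[OF vec_in_unitv_j] mult.assoc)
  finally have "a * (X (unitv j) * z) = X (unitv j) * (v powi k * a * z)" for z .
  then show ?thesis by (rule that)
qed

lemma Xj_ideal_mult_left:
  assumes a: "a \<in> Xj_quasicentral" and x: "x \<in> Xj_ideal"
  shows "a * x \<in> Xj_ideal"
proof -
  obtain y where y: "y \<in> base_ring" "x = X (unitv j) * y"
    using x unfolding Xj_ideal_def by blast
  obtain k where "\<And>z. a * (X (unitv j) * z) = X (unitv j) * (v powi k * a * z)"
    using quasicentral_move[OF a] by blast
  then have "a * x = X (unitv j) * (v powi k * a * y)" using y(2) by simp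
  then show ?thesis
    unfolding Xj_ideal_def
    using y(1) quasicentral_in_base_ring[OF a] powi_v_in_base_ring base_ring_mult by blast
qed

lemma powi_v_commute_base_ring: "x \<in> base_ring \<Longrightarrow> v powi k * x = x * v powi k"
  by (rule base_ring_commute_laurent[OF laurent_powi])

lemma X1_power_in_base_ring: "X (unitv 1) ^ k \<in> base_ring"
  by (rule base_ring_power[OF X1_in_base_ring])

lemma X1_power_quasicentral: "X (unitv 1) ^ k \<in> Xj_quasicentral"
  by (rule quasicentral_power[OF X_quasicentral[OF vec_in_unitv_1 X1_in_base_ring]])

subsection \<open>Congruences modulo \<open>X\<^sub>j A\<close>\<close>

text \<open>\<open>r\<^sub>0\<close> indexes the term of \<open>Y\<^sub>1\<close> whose exponent \<open>P\<close> has vanishing \<open>j\<close>-th entry;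
  all other terms of \<open>Y\<^sub>1\<close> become divisible by \<open>X\<^sub>j\<close> after multiplication by \<open>X\<^sub>1\<close>.\<close>
definition r0 :: nat where
  "r0 = (if t > 0 then nat (d 1) else 0)"

definition P :: "nat \<Rightarrow> int" where
  "P = E0 (unitv 1)"

definition \<Gamma> :: "nat \<Rightarrow> int" where
  "\<Gamma> = unitv 1 + P"

lemma r0_in_range: "r0 \<in> {0..nat (d 1)}"
  by (simp add: r0_def)

lemma vec_in_P [intro]: "vec_in m P" and vec_in_Gamma [intro]: "vec_in m \<Gamma>"
  unfolding P_def \<Gamma>_def by auto

lemma P_1: "P 1 = -1" and Gamma_1: "\<Gamma> 1 = 0"
  by (simp_all add: \<Gamma>_def P_def mutE_vec_1 unitv_apply)

lemma Gamma_j: "t \<noteq> 0 \<Longrightarrow> \<Gamma> j = 0"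
  using E0_j[of "unitv 1"] j_ne_1 by (simp add: \<Gamma>_def P_def unitv_apply)

lemma X_E0_split:
  assumes "vec_in m c"
  shows "X (E0 c) = v powi (- Lam1 (unitv 1) (c - unitv 1)) * (X P * X (E0 (c - unitv 1)))"
proof -
  have "E0 c - P = E0 (c - unitv 1)" by (simp add: P_def mutE_vec_diff)
  then show ?thesis
    using X_split_left[OF vec_in_P vec_in_mutE_vec[OF assms]] Lam1_eq_E0[of "unitv 1" "c - unitv 1"]
    by (simp add: P_def)
qed

lemma X_Gamma_in_base_ring: "t \<noteq> 0 \<Longrightarrow> X \<Gamma> \<in> base_ring"
  using X_in_base_ring[OF vec_in_Gamma] Gamma_1 Gamma_j by simp

lemma Y1_exp_r0: "Y1_exp r0 = P"
proof (rule ext)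
  fix k
  have "int (nat (d 1)) = d 1" using d1_pos by simp
  then show "Y1_exp r0 k = P k"
    using Y1_exp_1 P_1
    by (cases "k = 1") (simp_all add: Y1_exp_def P_def mutE_vec_apply r0_def eps0_def unitv_apply)
qed

lemma Y1_exp_j_pos:
  assumes t: "t \<noteq> 0" and r: "r \<in> {0..nat (d 1)}" "r \<noteq> r0"
  shows "Y1_exp r j \<ge> 1"
proof (cases "t > 0")
  case True
  then have "\<beta> 1 j < 0" using sgn_beta_1_j by (simp add: sgn_if split: if_splits)
  moreover have "int r < d 1" using r True by (auto simp: r0_def)
  ultimately have "1 \<le> (d 1 - int r) * (- \<beta> 1 j)"
    using mult_mono[of 1 "d 1 - int r" 1 "- \<beta> 1 j"] by simp
  then show ?thesis using \<open>\<beta> 1 j < 0\<close> j_ne_1 by (simp add: Y1_exp_def pos_def unitv_apply)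
next
  case False
  then have "\<beta> 1 j > 0" using t sgn_beta_1_j by (simp add: sgn_if split: if_splits)
  moreover have "r \<ge> 1" using r False by (simp add: r0_def)
  ultimately have "1 \<le> int r * \<beta> 1 j"
    using mult_mono[of 1 "int r" 1 "\<beta> 1 j"] by simp
  then show ?thesis using \<open>\<beta> 1 j > 0\<close> j_ne_1 by (simp add: Y1_exp_def pos_def unitv_apply)
qed

abbreviation Y1_rest :: 'f where
  "Y1_rest \<equiv> (\<Sum>r\<in>{0..nat (d 1)} - {r0}. h 1 r * X (Y1_exp r))"

lemma Y1_split: "Y1 = X P + Y1_rest"
  using sum.remove[OF _ r0_in_range, of "\<lambda>r. h 1 r * X (Y1_exp r)"] h_ends one_in_n Y1_exp_r0
  by (simp add: Y1_eq_sum r0_def)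

lemma X1_Y1_rest: "t \<noteq> 0 \<Longrightarrow> X (unitv 1) * Y1_rest \<in> Xj_ideal"
  and Y1_rest_X1: "t \<noteq> 0 \<Longrightarrow> Y1_rest * X (unitv 1) \<in> Xj_ideal"
proof -
  assume t: "t \<noteq> 0"
  have in_ideal: "X (unitv 1 + Y1_exp r) \<in> Xj_ideal" "X (Y1_exp r + unitv 1) \<in> Xj_ideal"
    if r: "r \<in> {0..nat (d 1)} - {r0}" for r
    using Y1_exp_1[of r] Y1_exp_j_pos[OF t, of r] r j_ne_1
    by (auto intro!: X_in_Xj_ideal simp: unitv_apply)
  have h: "h 1 r \<in> Xj_quasicentral" "v powi k \<in> Xj_quasicentral"
    if "r \<in> {0..nat (d 1)} - {r0}" for r k
    using that h_1_laurent laurent_quasicentral laurent_powi by auto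
  have "X (unitv 1) * Y1_rest = (\<Sum>r\<in>{0..nat (d 1)} - {r0}. h 1 r * (X (unitv 1) * X (Y1_exp r)))"
    using base_ring_commute_laurent[OF h_1_laurent X1_in_base_ring]
    by (simp add: sum_distrib_left mult.assoc[symmetric])
  also have "\<dots> \<in> Xj_ideal"
    using X_mult[OF vec_in_unitv_1 vec_in_Y1_exp] in_ideal h
    by (auto intro!: Xj_ideal_sum Xj_ideal_mult_left)
  finally show "X (unitv 1) * Y1_rest \<in> Xj_ideal" .
  have "Y1_rest * X (unitv 1) = (\<Sum>r\<in>{0..nat (d 1)} - {r0}. h 1 r * (X (Y1_exp r) * X (unitv 1)))"
    by (simp add: sum_distrib_right mult.assoc)
  also have "\<dots> \<in> Xj_ideal"
    using X_mult[OF vec_in_Y1_exp vec_in_unitv_1] in_ideal h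
    by (auto intro!: Xj_ideal_sum Xj_ideal_mult_left)
  finally show "Y1_rest * X (unitv 1) \<in> Xj_ideal" .
qed

lemma X1_power_X_P:
  obtains s where "X (unitv 1) ^ Suc k * X P = v powi s * (X \<Gamma> * X (unitv 1) ^ k)"
proof -
  have "X (unitv 1) * X P = v powi Lam (unitv 1) P * X \<Gamma>"
    unfolding \<Gamma>_def by (rule X_mult) auto
  then have "X (unitv 1) ^ Suc k * X P = X (unitv 1) ^ k * v powi Lam (unitv 1) P * X \<Gamma>"
    by (simp only: power_Suc2 mult.assoc)
  also have "\<dots> = v powi Lam (unitv 1) P * (X (unitv 1) ^ k * X \<Gamma>)"
    by (simp only: mult.assoc[symmetric] powi_v_commute_base_ring[OF X1_power_in_base_ring])
  also have "\<dots> = v powi (Lam (unitv 1) P + 2 * (int k * Lam (unitv 1) \<Gamma>)) * (X \<Gamma> * X (unitv 1) ^ k)"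
    by (simp only: X_power_commute_X[OF vec_in_unitv_1 vec_in_Gamma] mult.assoc[symmetric] powi_v_add)
  finally show ?thesis by (rule that)
qed

lemma X1_power_X'_split:
  assumes "vec_in m c"
  obtains s where "X (unitv 1) ^ Suc k * X' c - X (unitv 1) ^ Suc k * X (E0 c)
    = v powi (- Lam1 (unitv 1) (c - unitv 1)) *
      (X (unitv 1) ^ k * (X (unitv 1) * Y1_rest) * X' (c - unitv 1)
       + v powi s * (X \<Gamma> * (X (unitv 1) ^ k * X' (c - unitv 1)
                                - X (unitv 1) ^ k * X (E0 (c - unitv 1)))))"
proof -
  let ?X1 = "X (unitv 1)" and ?y = "c - unitv 1"
  define a where "a = Lam1 (unitv 1) ?y"
  have X'c: "X' c = v powi (- a) * (Y1 * X' ?y)"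
    using X'_split_left[OF vec_in_unitv_1 assms] unfolding X'_unitv_1 a_def .
  have XEc: "X (E0 c) = v powi (- a) * (X P * X (E0 ?y))"
    using X_E0_split[OF assms] unfolding a_def .
  obtain s where XP: "?X1 ^ Suc k * X P = v powi s * (X \<Gamma> * ?X1 ^ k)"
    using X1_power_X_P by blast
  have commute: "?X1 ^ Suc k * v powi (- a) = v powi (- a) * ?X1 ^ Suc k"
    by (rule powi_v_commute_base_ring[OF X1_power_in_base_ring, symmetric])
  have "?X1 ^ Suc k * X' c - ?X1 ^ Suc k * X (E0 c)
      = v powi (- a) * (?X1 ^ Suc k * Y1 * X' ?y - ?X1 ^ Suc k * X P * X (E0 ?y))"
    unfolding X'c XEc by (simp add: mult.assoc[symmetric] commute right_diff_distrib del: power_Suc)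
  also have "?X1 ^ Suc k * Y1 * X' ?y = ?X1 ^ k * (?X1 * Y1_rest) * X' ?y + ?X1 ^ Suc k * X P * X' ?y"
    by (subst Y1_split) (simp add: algebra_simps power_Suc2 del: power_Suc)
  also have "?X1 ^ Suc k * X P * X' ?y = v powi s * (X \<Gamma> * (?X1 ^ k * X' ?y))"
    unfolding XP by (simp only: mult.assoc)
  also have "?X1 ^ Suc k * X P * X (E0 ?y) = v powi s * (X \<Gamma> * (?X1 ^ k * X (E0 ?y)))"
    unfolding XP by (simp only: mult.assoc)
  finally show ?thesis
    using that unfolding a_def by (simp only: right_diff_distrib add_diff_eq)
qed

text \<open>Each factor \<open>X'(e\<^sub>1) = Y\<^sub>1\<close> of \<open>X'(c)\<close> can be traded for its leading term \<open>X(P) = X(E e\<^sub>1)\<close> once it is preceded by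
  \<open>X\<^sub>1\<close>, and \<open>\<Lambda>\<^sub>1 = E\<^sup>T \<Lambda> E\<close> makes the twists agree.\<close>
lemma X1_power_X'_cong:
  assumes t: "t \<noteq> 0"
    and "vec_in m c" "c 1 \<ge> 0" "c j \<ge> 0" "nat (c 1) \<le> k"
  shows "X (unitv 1) ^ k * X' c - X (unitv 1) ^ k * X (E0 c) \<in> Xj_ideal"
  using assms(2-)
proof (induction "nat (c 1)" arbitrary: c k)
  case 0
  then have "c 1 = 0" by simp
  then show ?case using X'_eq_X[OF 0(2)] mutE_vec_fixed Xj_ideal_zero by simp
next
  case (Suc s)
  let ?X1 = "X (unitv 1)" and ?y = "c - unitv 1"
  obtain k' where k: "k = Suc k'" using Suc.prems Suc.hyps(2) by (cases k) auto
  have y: "vec_in m ?y" "?y 1 \<ge> 0" "?y j \<ge> 0" "s = nat (?y 1)" "nat (?y 1) \<le> k'"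
    using Suc.prems Suc.hyps(2) k j_ne_1 by (auto simp: unitv_apply)
  obtain s' where split: "?X1 ^ k * X' c - ?X1 ^ k * X (E0 c)
    = v powi (- Lam1 (unitv 1) ?y) * (?X1 ^ k' * (?X1 * Y1_rest) * X' ?y
       + v powi s' * (X \<Gamma> * (?X1 ^ k' * X' ?y - ?X1 ^ k' * X (E0 ?y))))"
    unfolding k using X1_power_X'_split[OF Suc.prems(1)] by blast
  have "v powi s' * X \<Gamma> \<in> Xj_quasicentral"
    by (rule quasicentral_mult[OF laurent_quasicentral[OF laurent_powi]
          X_quasicentral[OF vec_in_Gamma X_Gamma_in_base_ring[OF t]]])
  then have leading: "v powi s' * (X \<Gamma> * (?X1 ^ k' * X' ?y - ?X1 ^ k' * X (E0 ?y))) \<in> Xj_ideal"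
    unfolding mult.assoc[symmetric] using Suc.hyps(1)[OF y(4) y(1-3) y(5)] by (rule Xj_ideal_mult_left)
  have rest: "?X1 ^ k' * (?X1 * Y1_rest) * X' ?y \<in> Xj_ideal"
    by (rule Xj_ideal_mult_right[OF Xj_ideal_mult_left[OF X1_power_quasicentral X1_Y1_rest[OF t]]
          X'_in_base_ring[OF y(1-3)]])
  show ?case
    unfolding split
    by (rule Xj_ideal_mult_left[OF laurent_quasicentral[OF laurent_powi] Xj_ideal_add[OF rest leading]])
qed

lemma Y1_power_in_base_ring: "Y1 ^ k \<in> base_ring"
  by (rule base_ring_power[OF Y1_in_base_ring])

lemma Y1_power_X1_power_step:
  assumes t: "t \<noteq> 0"
  obtains e where "Y1 ^ Suc k * X (unitv 1) ^ Suc k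
    - v powi e * (X \<Gamma> * (Y1 ^ k * X (unitv 1) ^ k)) \<in> Xj_ideal"
proof -
  let ?X1 = "X (unitv 1)"
  obtain e0 where e0: "Y1 ^ k * X \<Gamma> = v powi e0 * (X \<Gamma> * Y1 ^ k)"
    using Y1_power_commute_X[OF vec_in_Gamma Gamma_1] by blast
  define c0 where "c0 = Lam P (unitv 1)"
  have XP_X1: "X P * ?X1 = v powi c0 * X \<Gamma>"
    using X_mult[OF vec_in_P vec_in_unitv_1] unfolding c0_def \<Gamma>_def by (simp add: add.commute)
  have "Y1 ^ k * (X P * ?X1) = (Y1 ^ k * v powi c0) * X \<Gamma>"
    by (simp only: XP_X1 mult.assoc)
  also have "\<dots> = v powi c0 * (Y1 ^ k * X \<Gamma>)"
    by (simp only: powi_v_commute_base_ring[OF Y1_power_in_base_ring, symmetric] mult.assoc)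
  also have "\<dots> = v powi (c0 + e0) * (X \<Gamma> * Y1 ^ k)"
    by (simp only: e0 mult.assoc[symmetric] powi_v_add)
  finally have leading: "Y1 ^ k * (X P * ?X1) = v powi (c0 + e0) * (X \<Gamma> * Y1 ^ k)" .
  have Y1_X1: "Y1 * ?X1 = Y1_rest * ?X1 + X P * ?X1"
    by (subst Y1_split) (simp add: distrib_right add.commute)
  have "Y1 ^ Suc k * ?X1 ^ Suc k = Y1 ^ k * (Y1 * ?X1) * ?X1 ^ k"
    by (simp add: mult.assoc[symmetric] power_commutes)
  also have "\<dots> = Y1 ^ k * (Y1_rest * ?X1) * ?X1 ^ k + v powi (c0 + e0) * (X \<Gamma> * Y1 ^ k) * ?X1 ^ k"
    by (simp only: Y1_X1 distrib_left distrib_right leading)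
  finally have "Y1 ^ Suc k * ?X1 ^ Suc k - v powi (c0 + e0) * (X \<Gamma> * (Y1 ^ k * ?X1 ^ k))
      = Y1 ^ k * (Y1_rest * ?X1) * ?X1 ^ k"
    by (simp add: mult.assoc)
  moreover have "Y1 ^ k * (Y1_rest * ?X1) * ?X1 ^ k \<in> Xj_ideal"
    by (rule Xj_ideal_mult_right[OF Xj_ideal_mult_left[OF quasicentral_power[OF Y1_quasicentral]
          Y1_rest_X1[OF t]] X1_power_in_base_ring])
  ultimately show ?thesis using that by metis
qed

lemma Y1_power_X1_power_cong:
  assumes t: "t \<noteq> 0"
  obtains \<kappa> where "Y1 ^ k * X (unitv 1) ^ k - v powi \<kappa> * X \<Gamma> ^ k \<in> Xj_ideal"
proof -
  let ?X1 = "X (unitv 1)"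
  have "\<exists>\<kappa>. Y1 ^ k * ?X1 ^ k - v powi \<kappa> * X \<Gamma> ^ k \<in> Xj_ideal"
  proof (induct k)
    case 0
    show ?case using Xj_ideal_zero by (intro exI[of _ 0]) simp
  next
    case (Suc k)
    then obtain \<kappa> where IH: "Y1 ^ k * ?X1 ^ k - v powi \<kappa> * X \<Gamma> ^ k \<in> Xj_ideal" by blast
    obtain e where step: "Y1 ^ Suc k * ?X1 ^ Suc k - v powi e * (X \<Gamma> * (Y1 ^ k * ?X1 ^ k)) \<in> Xj_ideal"
      using Y1_power_X1_power_step[OF t] by blast
    have XGamma_power: "X \<Gamma> * (v powi \<kappa> * X \<Gamma> ^ k) = v powi \<kappa> * X \<Gamma> ^ Suc k"
      by (simp only: mult.assoc[symmetric] X_commute_powi_v[OF vec_in_Gamma, symmetric])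
        (simp only: mult.assoc power_Suc)
    have "Y1 ^ Suc k * ?X1 ^ Suc k - v powi (e + \<kappa>) * X \<Gamma> ^ Suc k
        = (Y1 ^ Suc k * ?X1 ^ Suc k - v powi e * (X \<Gamma> * (Y1 ^ k * ?X1 ^ k)))
          + v powi e * X \<Gamma> * (Y1 ^ k * ?X1 ^ k - v powi \<kappa> * X \<Gamma> ^ k)"
      unfolding right_diff_distrib mult.assoc XGamma_power
      by (simp add: mult.assoc[symmetric] powi_v_add)
    also have "\<dots> \<in> Xj_ideal"
      by (rule Xj_ideal_add[OF step Xj_ideal_mult_left[OF quasicentral_mult[OF
            laurent_quasicentral[OF laurent_powi] X_quasicentral[OF vec_in_Gamma
            X_Gamma_in_base_ring[OF t]]] IH]])
    finally show ?case by blast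
  qed
  then show ?thesis using that by blast
qed

subsection \<open>Comparing the two \<open>j\<close>-th cluster variables\<close>

lemma h_j_laurent: "r \<in> {0..nat (d j)} \<Longrightarrow> h j r \<in> laurent v"
  using h_laurent j_in_n by blast

definition Zj_exp :: "nat \<Rightarrow> nat \<Rightarrow> int" where
  "Zj_exp r = (\<lambda>k. int r * pos (\<beta>' k) + (d j - int r) * pos (- \<beta>' k))"

definition Yj_exp :: "nat \<Rightarrow> nat \<Rightarrow> int" where
  "Yj_exp r = (\<lambda>k. int r * pos (\<beta> j k) + (d j - int r) * pos (- \<beta> j k))"

lemma Zj_eq_sum: "Zj = (\<Sum>r\<in>{0..nat (d j)}. h j r * X' (Zj_exp r - unitv j))"
  unfolding mut_var_def Zj_exp_def by (intro sum.cong refl) (simp add: fun_diff_def)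

lemma Yj_eq_sum: "Yj = (\<Sum>r\<in>{0..nat (d j)}. h j r * X (Yj_exp r - unitv j))"
  unfolding mut_var_def Yj_exp_def by (intro sum.cong refl) (simp add: fun_diff_def)

lemma vec_in_Zj_exp [intro]: "vec_in m (Zj_exp r)"
  using vec_in_beta' unfolding Zj_exp_def vec_in_def by (auto simp: pos_def)

lemma vec_in_Yj_exp [intro]: "vec_in m (Yj_exp r)"
  using vec_in_beta[of j] unfolding Yj_exp_def vec_in_def by (auto simp: pos_def)

lemma Zj_exp_affine: "Zj_exp r = Zj_exp 0 + vscale (int r) \<beta>'"
  and Yj_exp_affine: "Yj_exp r = Yj_exp 0 + vscale (int r) (\<beta> j)"
  by (rule ext; simp add: Zj_exp_def Yj_exp_def pos_uminus algebra_simps)+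

lemma Zj_eq_Yj_if_t0: "t = 0 \<Longrightarrow> Zj = Yj"
proof -
  assume t: "t = 0"
  have "X' (Yj_exp r - unitv j) = X (Yj_exp r - unitv j)" for r
    using t j_ne_1
    by (intro X'_eq_X vec_in_diff vec_in_Yj_exp vec_in_unitv_j) (simp add: Yj_exp_def pos_def unitv_apply)
  moreover have "Zj_exp = Yj_exp"
    unfolding Zj_exp_def Yj_exp_def beta'_eq_beta[OF t] ..
  ultimately show ?thesis unfolding Zj_eq_sum Yj_eq_sum by simp
qed

definition abs_b1j :: nat where
  "abs_b1j = nat \<bar>B 1 j\<bar>"

lemma int_abs_b1j: "int abs_b1j = d j * \<bar>t\<bar>"
  using B_eq_d_beta[OF j_in_n one_in_m] dj_pos by (simp add: abs_b1j_def abs_mult)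

lemma Zj_exp_1_bounds:
  assumes r: "r \<in> {0..nat (d j)}"
  shows "0 \<le> Zj_exp r 1" "Zj_exp r 1 \<le> int abs_b1j"
proof -
  have r': "0 \<le> int r" "int r \<le> d j" using r dj_pos by auto
  have Z1: "Zj_exp r 1 = int r * pos (- t) + (d j - int r) * pos t"
    by (simp add: Zj_exp_def beta'_1)
  show "0 \<le> Zj_exp r 1" unfolding Z1 using r' by (simp add: pos_def)
  show "Zj_exp r 1 \<le> int abs_b1j"
  proof (cases "t \<ge> 0")
    case True
    have "(d j - int r) * t \<le> d j * t" using r' True by (simp add: mult_right_mono)
    then show ?thesis unfolding Z1 int_abs_b1j using True by (simp add: pos_def)
  next
    case False
    have "int r * (- t) \<le> d j * (- t)" using r' False by (intro mult_right_mono) auto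
    then show ?thesis unfolding Z1 int_abs_b1j using False by (simp add: pos_def)
  qed
qed

lemma Zj_exp_j: "t \<noteq> 0 \<Longrightarrow> Zj_exp r j = 0"
  by (simp add: Zj_exp_def beta'_j pos_def)

lemma Yj_exp_j: "Yj_exp r j = 0"
  by (simp add: Yj_exp_def beta_j_j pos_def)

lemma E0_Zj_exp: "t \<noteq> 0 \<Longrightarrow> E0 (Zj_exp r) = E0 (Zj_exp 0) + vscale (int r) (\<beta> j)"
  using Zj_exp_affine[of r] E0_beta' by (simp add: mutE_vec_add mutE_vec_vscale)

text \<open>The exponents of the terms of \<open>X\<^sub>1\<^sup>b Z\<^sub>j\<close> modulo \<open>X\<^sub>j A\<close> and of \<open>Y\<^sub>j\<close> differ by the
  constant vector \<open>w\<close>.\<close>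
definition w :: "nat \<Rightarrow> int" where
  "w = vscale (int abs_b1j) (unitv 1) + E0 (Zj_exp 0) - Yj_exp 0"

lemma vec_in_w [intro]: "vec_in m w"
  unfolding w_def by auto

lemma w_1: "w 1 = 0"
proof -
  have "w 1 = int abs_b1j - Zj_exp 0 1 - Yj_exp 0 1"
    by (simp add: w_def mutE_vec_1 unitv_apply)
  then show ?thesis
    by (cases "t < 0") (simp_all add: int_abs_b1j Zj_exp_def Yj_exp_def beta'_1 pos_def algebra_simps)
qed

lemma w_j: "t \<noteq> 0 \<Longrightarrow> w j = 0"
  using E0_j[of "Zj_exp 0"] Zj_exp_j[of 0] Yj_exp_j[of 0] j_ne_1 by (simp add: w_def unitv_apply)

lemma w_plus_Yj_exp:
  assumes t: "t \<noteq> 0"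
  shows "w + Yj_exp r = vscale (int abs_b1j) (unitv 1) + E0 (Zj_exp r)"
  unfolding E0_Zj_exp[OF t, of r] w_def Yj_exp_affine[of r] by (rule ext) simp

text \<open>The twist by which the \<open>r\<close>-th terms of \<open>X\<^sub>1\<^sup>b X\<^sub>j Z\<^sub>j\<close> and \<open>X(w) X\<^sub>j Y\<^sub>j\<close> differ modulo
  \<open>X\<^sub>j A\<close>; it does not depend on \<open>r\<close>, since \<open>\<beta>\<^sup>j\<close> is \<open>\<Lambda>\<close>-orthogonal to \<open>e\<^sub>1\<close> and \<open>w\<close>.\<close>
definition twist :: "nat \<Rightarrow> int" where
  "twist r = Lam1 (unitv j) (Zj_exp r - unitv j) + int abs_b1j * Lam (unitv 1) (E0 (Zj_exp r))
     - Lam (unitv j) (Yj_exp r - unitv j) - Lam w (Yj_exp r)"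

lemma twist_const:
  assumes t: "t \<noteq> 0"
  shows "twist r = twist 0"
proof -
  have E0_ej: "E0 (unitv j) = unitv j"
    by (rule mutE_vec_fixed) (simp add: unitv_apply j_ne_1)
  have "Lam (unitv 1) (\<beta> j) = 0" and "Lam w (\<beta> j) = 0"
    using Lam_beta_right[OF j_in_n, of "unitv 1"] Lam_beta_right[OF j_in_n, of w] w_j[OF t] j_ne_1
    by (simp_all add: unitv_apply)
  then show ?thesis
    unfolding twist_def Lam1_eq_E0 E0_ej mutE_vec_diff E0_Zj_exp[OF t, of r] Yj_exp_affine[of r]
    by (simp add: bil_linear)
qed

definition u :: 'f where
  "u = v powi twist 0 * X w"

lemma X_w_in_base_ring: "t \<noteq> 0 \<Longrightarrow> X w \<in> base_ring"
  and X_uminus_w_in_base_ring: "t \<noteq> 0 \<Longrightarrow> X (- w) \<in> base_ring"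
  using X_in_base_ring[of w] X_in_base_ring[of "- w"] w_1 w_j by auto

lemma u_quasicentral: "t \<noteq> 0 \<Longrightarrow> u \<in> Xj_quasicentral"
  unfolding u_def
  by (rule quasicentral_mult[OF laurent_quasicentral[OF laurent_powi] X_quasicentral[OF vec_in_w X_w_in_base_ring]])

lemma u_in_base_ring: "t \<noteq> 0 \<Longrightarrow> u \<in> base_ring"
  using u_quasicentral quasicentral_in_base_ring by blast

lemma Xj_Zj_eq_sum: "X (unitv j) * Zj =
    (\<Sum>r\<in>{0..nat (d j)}. h j r * (v powi Lam1 (unitv j) (Zj_exp r - unitv j) * X' (Zj_exp r)))"
  unfolding Zj_eq_sum sum_distrib_left
proof (intro sum.cong refl)
  fix r assume r: "r \<in> {0..nat (d j)}"
  have cancel: "unitv j + (Zj_exp r - unitv j) = Zj_exp r" by (rule ext) simp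
  have "X (unitv j) * (h j r * X' (Zj_exp r - unitv j)) = h j r * (X' (unitv j) * X' (Zj_exp r - unitv j))"
    using base_ring_commute_laurent[OF h_j_laurent[OF r] Xj_in_base_ring] X'_unitv j_in_m j_ne_1
    by (simp add: mult.assoc[symmetric])
  also have "\<dots> = h j r * (v powi Lam1 (unitv j) (Zj_exp r - unitv j) * X' (Zj_exp r))"
    using X'_mult[OF vec_in_unitv_j vec_in_diff[OF vec_in_Zj_exp vec_in_unitv_j]] unfolding cancel by simp
  finally show "X (unitv j) * (h j r * X' (Zj_exp r - unitv j))
      = h j r * (v powi Lam1 (unitv j) (Zj_exp r - unitv j) * X' (Zj_exp r))" .
qed

lemma Xj_Yj_eq_sum: "X (unitv j) * Yj =
    (\<Sum>r\<in>{0..nat (d j)}. h j r * (v powi Lam (unitv j) (Yj_exp r - unitv j) * X (Yj_exp r)))"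
  unfolding Yj_eq_sum sum_distrib_left
proof (intro sum.cong refl)
  fix r assume r: "r \<in> {0..nat (d j)}"
  have cancel: "unitv j + (Yj_exp r - unitv j) = Yj_exp r" by (rule ext) simp
  have "X (unitv j) * (h j r * X (Yj_exp r - unitv j)) = h j r * (X (unitv j) * X (Yj_exp r - unitv j))"
    using base_ring_commute_laurent[OF h_j_laurent[OF r] Xj_in_base_ring]
    by (simp add: mult.assoc[symmetric])
  also have "\<dots> = h j r * (v powi Lam (unitv j) (Yj_exp r - unitv j) * X (Yj_exp r))"
    using X_mult[OF vec_in_unitv_j vec_in_diff[OF vec_in_Yj_exp vec_in_unitv_j]] unfolding cancel by simp
  finally show "X (unitv j) * (h j r * X (Yj_exp r - unitv j))
      = h j r * (v powi Lam (unitv j) (Yj_exp r - unitv j) * X (Yj_exp r))" .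
qed

lemma X'_Zj_exp_in_base_ring: "t \<noteq> 0 \<Longrightarrow> r \<in> {0..nat (d j)} \<Longrightarrow> X' (Zj_exp r) \<in> base_ring"
  using X'_in_base_ring[OF vec_in_Zj_exp] Zj_exp_1_bounds Zj_exp_j by simp

lemma Xj_Zj_in_base_ring: "t \<noteq> 0 \<Longrightarrow> X (unitv j) * Zj \<in> base_ring"
  unfolding Xj_Zj_eq_sum
  by (intro base_ring_sum base_ring_mult laurent_in_base_ring[OF h_j_laurent]
      powi_v_in_base_ring X'_Zj_exp_in_base_ring)

lemma Zj_term_cong:
  assumes t: "t \<noteq> 0" and r: "r \<in> {0..nat (d j)}"
  shows "X (unitv 1) ^ abs_b1j * (v powi Lam1 (unitv j) (Zj_exp r - unitv j) * X' (Zj_exp r))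
       - u * (v powi Lam (unitv j) (Yj_exp r - unitv j) * X (Yj_exp r)) \<in> Xj_ideal"
proof -
  define a a' where "a = Lam1 (unitv j) (Zj_exp r - unitv j)" and "a' = Lam (unitv j) (Yj_exp r - unitv j)"
  let ?X1b = "X (unitv 1) ^ abs_b1j"
  have commute: "?X1b * v powi a = v powi a * ?X1b"
    using powi_v_commute_base_ring[OF X1_power_in_base_ring] by simp
  have "?X1b * X (E0 (Zj_exp r))
      = v powi (int abs_b1j * Lam (unitv 1) (E0 (Zj_exp r))) * X (w + Yj_exp r)"
    using X_mult[OF vec_in_vscale[OF vec_in_unitv_1] vec_in_mutE_vec[OF vec_in_Zj_exp]]
    by (simp add: X_power vec_in_unitv_1 bil_vscale_left w_plus_Yj_exp[OF t])
  moreover have "u * (v powi a' * X (Yj_exp r))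
      = v powi (a + int abs_b1j * Lam (unitv 1) (E0 (Zj_exp r))) * X (w + Yj_exp r)"
  proof -
    have "u * (v powi a' * X (Yj_exp r)) = v powi twist 0 * (X w * v powi a') * X (Yj_exp r)"
      unfolding u_def by (simp only: mult.assoc)
    also have "\<dots> = v powi (twist 0 + a') * (X w * X (Yj_exp r))"
      by (simp only: X_commute_powi_v[OF vec_in_w, symmetric]) (simp only: mult.assoc[symmetric] powi_v_add)
    also have "\<dots> = v powi (twist 0 + a' + Lam w (Yj_exp r)) * X (w + Yj_exp r)"
      by (simp add: X_mult[OF vec_in_w vec_in_Yj_exp] mult.assoc[symmetric] powi_v_add)
    also have "twist 0 + a' + Lam w (Yj_exp r) = a + int abs_b1j * Lam (unitv 1) (E0 (Zj_exp r))"
      using twist_const[OF t, of r] unfolding twist_def[of r] a_def a'_def by linarith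
    finally show ?thesis .
  qed
  ultimately have leading: "v powi a * (?X1b * X (E0 (Zj_exp r))) = u * (v powi a' * X (Yj_exp r))"
    by (simp add: mult.assoc[symmetric] powi_v_add)
  have "?X1b * X' (Zj_exp r) - ?X1b * X (E0 (Zj_exp r)) \<in> Xj_ideal"
    using Zj_exp_1_bounds[OF r] Zj_exp_j[OF t]
    by (intro X1_power_X'_cong[OF t vec_in_Zj_exp]) auto
  then have "v powi a * (?X1b * X' (Zj_exp r) - ?X1b * X (E0 (Zj_exp r))) \<in> Xj_ideal"
    by (rule Xj_ideal_mult_left[OF laurent_quasicentral[OF laurent_powi]])
  then show ?thesis
    unfolding a_def[symmetric] a'_def[symmetric] leading[symmetric]
    by (simp add: right_diff_distrib mult.assoc[symmetric] commute)
qed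

lemma Xj_Zj_cong: "t \<noteq> 0 \<Longrightarrow> X (unitv 1) ^ abs_b1j * (X (unitv j) * Zj) - u * (X (unitv j) * Yj) \<in> Xj_ideal"
proof -
  assume t: "t \<noteq> 0"
  let ?Z = "\<lambda>r. v powi Lam1 (unitv j) (Zj_exp r - unitv j) * X' (Zj_exp r)"
  let ?W = "\<lambda>r. v powi Lam (unitv j) (Yj_exp r - unitv j) * X (Yj_exp r)"
  have "X (unitv 1) ^ abs_b1j * (h j r * ?Z r) - u * (h j r * ?W r)
      = h j r * (X (unitv 1) ^ abs_b1j * ?Z r - u * ?W r)" if r: "r \<in> {0..nat (d j)}" for r
  proof -
    have "X (unitv 1) ^ abs_b1j * h j r = h j r * X (unitv 1) ^ abs_b1j" "u * h j r = h j r * u"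
      using base_ring_commute_laurent[OF h_j_laurent[OF r]] X1_power_in_base_ring u_in_base_ring[OF t]
      by auto
    then show ?thesis
      by (simp only: right_diff_distrib mult.assoc[symmetric])
  qed
  then have "X (unitv 1) ^ abs_b1j * (X (unitv j) * Zj) - u * (X (unitv j) * Yj)
      = (\<Sum>r\<in>{0..nat (d j)}. h j r * (X (unitv 1) ^ abs_b1j * ?Z r - u * ?W r))"
    unfolding Xj_Zj_eq_sum Xj_Yj_eq_sum sum_distrib_left sum_subtractf[symmetric]
    by (rule sum.cong[OF refl])
  also have "\<dots> \<in> Xj_ideal"
    using Zj_term_cong[OF t] h_j_laurent
    by (intro Xj_ideal_sum Xj_ideal_mult_left[OF laurent_quasicentral]) auto
  finally show ?thesis .
qed

lemma exchange_via_Xj_ideal: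
  assumes g: "g \<in> Xj_quasicentral" and g': "g' \<in> Xj_quasicentral"
    and g'_inv: "g'' \<in> base_ring" "g'' * g' = 1"
    and cong: "g * (X (unitv j) * a) - g' * (X (unitv j) * b) \<in> Xj_ideal"
  shows "b \<in> gen_ring (insert a base_gens)"
proof -
  obtain k1 where k1: "\<And>z. g * (X (unitv j) * z) = X (unitv j) * (v powi k1 * g * z)"
    using quasicentral_move[OF g] by blast
  obtain k2 where k2: "\<And>z. g' * (X (unitv j) * z) = X (unitv j) * (v powi k2 * g' * z)"
    using quasicentral_move[OF g'] by blast
  define y where "y = v powi k1 * g * a - v powi k2 * g' * b"
  have "X (unitv j) * y \<in> Xj_ideal"
    using cong unfolding y_def k1 k2 by (simp add: right_diff_distrib)
  then have y: "y \<in> base_ring" by (rule Xj_ideal_cancel)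
  have "g'' * v powi (- k2) * (v powi k2 * g' * b) = b"
    using g'_inv(2) by (simp add: mult.assoc[symmetric] powi_v_add)
      (simp add: mult.assoc powi_v_commute_base_ring[OF g'_inv(1), symmetric]
        mult.assoc[symmetric] powi_v_add)
  then have b: "b = g'' * v powi (- k2) * (v powi k1 * g * a - y)"
    unfolding y_def by simp
  have "base_ring \<subseteq> gen_ring (insert a base_gens)"
    unfolding base_ring_def by (rule gen_ring_subset) (auto intro: gen_ring.base)
  moreover have "a \<in> gen_ring (insert a base_gens)" by (rule gen_ring.base) simp
  ultimately show ?thesis
    unfolding b using g'_inv(1) y quasicentral_in_base_ring[OF g] powi_v_in_base_ring
    by (intro gen_ring.mult gen_ring_diff) auto
qed

lemma Yj_in_gen_ring_Zj:
  assumes t: "t \<noteq> 0"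
  shows "Yj \<in> gen_ring (insert Zj base_gens)"
proof (rule exchange_via_Xj_ideal)
  show "X (unitv 1) ^ abs_b1j \<in> Xj_quasicentral" by (rule X1_power_quasicentral)
  show "u \<in> Xj_quasicentral" by (rule u_quasicentral[OF t])
  show "X (- w) * v powi (- twist 0) \<in> base_ring"
    using X_uminus_w_in_base_ring[OF t] powi_v_in_base_ring base_ring_mult by blast
  show "X (- w) * v powi (- twist 0) * u = 1"
    unfolding u_def using X_uminus_mult[OF vec_in_w]
    by (simp add: mult.assoc) (simp add: mult.assoc[symmetric] powi_v_add)
  show "X (unitv 1) ^ abs_b1j * (X (unitv j) * Zj) - u * (X (unitv j) * Yj) \<in> Xj_ideal"
    by (rule Xj_Zj_cong[OF t])
qed

lemma Zj_in_gen_ring_Yj: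
  assumes t: "t \<noteq> 0"
  shows "Zj \<in> gen_ring (insert Yj base_gens)"
proof -
  obtain \<kappa> where \<kappa>: "Y1 ^ abs_b1j * X (unitv 1) ^ abs_b1j - v powi \<kappa> * X \<Gamma> ^ abs_b1j \<in> Xj_ideal"
    using Y1_power_X1_power_cong[OF t] by blast
  let ?Z = "X (unitv j) * Zj" and ?W = "X (unitv j) * Yj"
  have "Y1 ^ abs_b1j * (X (unitv 1) ^ abs_b1j * ?Z - u * ?W) \<in> Xj_ideal"
    by (rule Xj_ideal_mult_left[OF quasicentral_power[OF Y1_quasicentral] Xj_Zj_cong[OF t]])
  moreover have "(Y1 ^ abs_b1j * X (unitv 1) ^ abs_b1j - v powi \<kappa> * X \<Gamma> ^ abs_b1j) * ?Z \<in> Xj_ideal"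
    by (rule Xj_ideal_mult_right[OF \<kappa> Xj_Zj_in_base_ring[OF t]])
  ultimately have cong: "Y1 ^ abs_b1j * u * ?W - v powi \<kappa> * X \<Gamma> ^ abs_b1j * ?Z \<in> Xj_ideal"
    using Xj_ideal_diff by (fastforce simp: algebra_simps)
  have Gamma_power: "vec_in m (vscale (int abs_b1j) \<Gamma>)" "X \<Gamma> ^ abs_b1j = X (vscale (int abs_b1j) \<Gamma>)"
    using X_power[OF vec_in_Gamma] by auto
  have X_uminus_Gamma_power_in: "X (- vscale (int abs_b1j) \<Gamma>) \<in> base_ring"
    using X_in_base_ring[OF vec_in_uminus[OF Gamma_power(1)]] Gamma_1 Gamma_j[OF t] by simp
  show ?thesis
  proof (rule exchange_via_Xj_ideal)
    show "Y1 ^ abs_b1j * u \<in> Xj_quasicentral"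
      by (rule quasicentral_mult[OF quasicentral_power[OF Y1_quasicentral] u_quasicentral[OF t]])
    show "v powi \<kappa> * X \<Gamma> ^ abs_b1j \<in> Xj_quasicentral"
      by (rule quasicentral_mult[OF laurent_quasicentral[OF laurent_powi]
            quasicentral_power[OF X_quasicentral[OF vec_in_Gamma X_Gamma_in_base_ring[OF t]]]])
    show "X (- vscale (int abs_b1j) \<Gamma>) * v powi (- \<kappa>) \<in> base_ring"
      using X_uminus_Gamma_power_in powi_v_in_base_ring base_ring_mult by blast
    show "X (- vscale (int abs_b1j) \<Gamma>) * v powi (- \<kappa>) * (v powi \<kappa> * X \<Gamma> ^ abs_b1j) = 1"
      unfolding Gamma_power(2) using X_uminus_mult[OF Gamma_power(1)]
      by (simp add: mult.assoc) (simp add: mult.assoc[symmetric] powi_v_add)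
    show "Y1 ^ abs_b1j * u * ?W - v powi \<kappa> * X \<Gamma> ^ abs_b1j * ?Z \<in> Xj_ideal"
      by (rule cong)
  qed
qed

theorem ZP_adj_Zj_eq_Yj:
  "ZP_adj m n v X ({X (unitv 1), Y1, X (unitv j), Zj} \<union> inv_gens)
 = ZP_adj m n v X ({X (unitv 1), Y1, X (unitv j), Yj} \<union> inv_gens)"
proof (cases "t = 0")
  case True
  then show ?thesis using Zj_eq_Yj_if_t0 by simp
next
  case False
  have "ZP m n v X \<union> ({X (unitv 1), Y1, X (unitv j), y} \<union> inv_gens) = insert y base_gens" for y
    unfolding base_gens_def by auto
  then show ?thesis
    unfolding ZP_adj_def
    using gen_ring_insert_exchange[OF Zj_in_gen_ring_Yj Yj_in_gen_ring_Zj] False by simp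
qed

end

theorem proposition4p7:
  fixes m n j :: nat
    and L0 B0 :: "nat \<Rightarrow> nat \<Rightarrow> int"
    and d :: "nat \<Rightarrow> int"
    and h :: "nat \<Rightarrow> nat \<Rightarrow> 'f::division_ring"
    and v :: 'f
    and X X' :: "(nat \<Rightarrow> int) \<Rightarrow> 'f"
    and eps :: int
  assumes "2 \<le> n" and "n \<le> m"
    and "compatible_pair m n L0 B0"
    and "\<forall>k\<in>{1..n}. d k > 0 \<and> (\<forall>p\<in>{1..m}. d k dvd B0 p k)"
    and "\<forall>k\<in>{1..n}. \<forall>r\<in>{0..nat (d k)}. h k r \<in> laurent v \<and> h k r = h k (nat (d k) - r)"
    and "\<forall>k\<in>{1..n}. h k 0 = 1 \<and> h k (nat (d k)) = 1"
    and "qtorus_embedding m L0 v X"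
    and "eps = 1 \<or> eps = -1"
    and "qtorus_rel m (mut_Lambda m L0 B0 1 eps) v X'"
    and "X' (unitv 1) = mut_var m B0 d h X 1"
    and "\<forall>k\<in>{1..m}. k \<noteq> 1 \<longrightarrow> X' (unitv k) = X (unitv k)"
    and "j \<in> {2..n}"
  shows "ZP_adj m n v X
           ({X (unitv 1), mut_var m B0 d h X 1, X (unitv j),
             mut_var m (mut_B m n B0 1 eps) d h X' j}
            \<union> {y. \<exists>k\<in>{2..n}. k \<noteq> j \<and> (y = X (unitv k) \<or> y = inverse (X (unitv k)))})
       = ZP_adj m n v X
           ({X (unitv 1), mut_var m B0 d h X 1, X (unitv j), mut_var m B0 d h X j}
            \<union> {y. \<exists>k\<in>{2..n}. k \<noteq> j \<and> (y = X (unitv k) \<or> y = inverse (X (unitv k)))})"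
proof -
  have skew: "\<forall>k\<in>{1..m}. \<forall>l\<in>{1..m}. L0 k l = - L0 l k"
    using assms(3) unfolding compatible_pair_def by blast
  \<comment> \<open>The symmetry \<open>h\<^sub>k\<^sub>,\<^sub>r = h\<^sub>k\<^sub>,\<^sub>d\<^sub>k\<^sub>-\<^sub>r\<close> of the coefficients is not needed.\<close>
  have "\<forall>k\<in>{1..n}. \<forall>r\<in>{0..nat (d k)}. h k r \<in> laurent v"
    using assms(5) by blast
  then interpret exchange m L0 v X n B0 d h eps X' j
    using skew assms(1-4,6-12) by unfold_locales
  show ?thesis by (rule ZP_adj_Zj_eq_Yj)
qed

end
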